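(* Let $p \geq 5$ be a prime and let $G$ be a group of order $p^7$ of nilpotency class $5$ such that $\gamma_2(G)$ is elementary abelian of order $p^5$. Then: (i) $|\gamma_5(G)| = p$; (ii) $|\operatorname{Z}(G/\gamma_5(G))| = p^2$ and $|\operatorname{Z}_2(G)| = p^3$; (iii) $\operatorname{K}(G) \neq \gamma_2(G)$; (iv) the commutator length of $G$ is $2$.
   Context: For a group $G$, $[x,y] = x^{-1}y^{-1}xy$, $\operatorname{K}(G) = \{[a,b] \mid a,b \in G\}$, $\gamma_i(G)$ is the $i$-th term of the lower central series, $\operatorname{Z}(G)$ the center and $\operatorname{Z}_2(G)$ the second term of the upper central series. The commutator length of $G$ is the smallest positive integer $m$ such that every element of $\gamma_2(G)$ is a product of at most $m$ commutators in $G$. *)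

theory Defs
  imports "HOL-Algebra.Algebra"
begin

definition comm :: "('a, 'b) monoid_scheme \<Rightarrow> 'a \<Rightarrow> 'a \<Rightarrow> 'a" where
  "comm G x y = inv\<^bsub>G\<^esub> x \<otimes>\<^bsub>G\<^esub> inv\<^bsub>G\<^esub> y \<otimes>\<^bsub>G\<^esub> x \<otimes>\<^bsub>G\<^esub> y"

definition commutators :: "('a, 'b) monoid_scheme \<Rightarrow> 'a set" where
  "commutators G = {comm G a b | a b. a \<in> carrier G \<and> b \<in> carrier G}"

definition comm_subgroup :: "('a, 'b) monoid_scheme \<Rightarrow> 'a set \<Rightarrow> 'a set \<Rightarrow> 'a set" where
  "comm_subgroup G A B = generate G {comm G a b | a b. a \<in> A \<and> b \<in> B}"

text \<open>lcs G n = gamma_(n+1)(G).\<close>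
primrec lcs :: "('a, 'b) monoid_scheme \<Rightarrow> nat \<Rightarrow> 'a set" where
  "lcs G 0 = carrier G"
| "lcs G (Suc n) = comm_subgroup G (lcs G n) (carrier G)"

definition gamma :: "('a, 'b) monoid_scheme \<Rightarrow> nat \<Rightarrow> 'a set" where
  "gamma G i = lcs G (i - 1)"

definition center :: "('a, 'b) monoid_scheme \<Rightarrow> 'a set" where
  "center G = {z \<in> carrier G. \<forall>g \<in> carrier G. z \<otimes>\<^bsub>G\<^esub> g = g \<otimes>\<^bsub>G\<^esub> z}"

text \<open>Second centre: Z_2(G)/Z(G) = Z(G/Z(G)), i.e. [z,g] in Z(G) for all g.\<close>
definition center2 :: "('a, 'b) monoid_scheme \<Rightarrow> 'a set" where
  "center2 G = {z \<in> carrier G. \<forall>g \<in> carrier G. comm G z g \<in> center G}"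

definition nilpotency_class :: "('a, 'b) monoid_scheme \<Rightarrow> nat \<Rightarrow> bool" where
  "nilpotency_class G c \<longleftrightarrow> gamma G (c + 1) = {\<one>\<^bsub>G\<^esub>} \<and> gamma G c \<noteq> {\<one>\<^bsub>G\<^esub>}"

definition elementary_abelian :: "('a, 'b) monoid_scheme \<Rightarrow> 'a set \<Rightarrow> nat \<Rightarrow> bool" where
  "elementary_abelian G H p \<longleftrightarrow> subgroup H G \<and>
     (\<forall>x \<in> H. \<forall>y \<in> H. x \<otimes>\<^bsub>G\<^esub> y = y \<otimes>\<^bsub>G\<^esub> x) \<and>
     (\<forall>x \<in> H. x [^]\<^bsub>G\<^esub> p = \<one>\<^bsub>G\<^esub>)"

definition comm_products :: "('a, 'b) monoid_scheme \<Rightarrow> nat \<Rightarrow> 'a set" where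
  "comm_products G m = {foldr (\<otimes>\<^bsub>G\<^esub>) xs \<one>\<^bsub>G\<^esub> | xs. length xs \<le> m \<and> set xs \<subseteq> commutators G}"

definition commutator_length :: "('a, 'b) monoid_scheme \<Rightarrow> nat" where
  "commutator_length G = (LEAST m. 0 < m \<and> gamma G 2 \<subseteq> comm_products G m)"

end

theory Submission
  imports Defs
begin

text \<open>
  Write \<open>\<gamma>\<^sub>i\<close> for the lower central series and choose \<open>a, b\<close> generating \<open>G\<close> modulo \<open>\<gamma>\<^sub>2\<close>.
  As \<open>\<gamma>\<^sub>2\<close> is abelian, \<open>x \<mapsto> [x, g]\<close> is a homomorphism on \<open>\<gamma>\<^sub>2\<close>, \<open>\<gamma>\<^sub>i\<^sub>+\<^sub>1 = [\<gamma>\<^sub>i, a][\<gamma>\<^sub>i, b]\<close>,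
  and \<open>[[x, g], h] = [[x, h], g]\<close> for \<open>x \<in> \<gamma>\<^sub>2\<close>. With \<open>c = [b, a]\<close>, \<open>u = [c, a]\<close>, \<open>v = [c, b]\<close>
  this gives \<open>\<gamma>\<^sub>2 = \<langle>c\<rangle>\<gamma>\<^sub>3\<close> and \<open>\<gamma>\<^sub>3 = \<langle>u\<rangle>\<langle>v\<rangle>\<gamma>\<^sub>4\<close>, so \<open>|\<gamma>\<^sub>3| = p\<^sup>4\<close>, and the relation
  \<open>[v, a] = [u, b]\<close> excludes \<open>|\<gamma>\<^sub>4| = p\<^sup>3\<close>; hence \<open>|\<gamma>\<^sub>4| = p\<^sup>2\<close> and \<open>|\<gamma>\<^sub>5| = p\<close>.

  The preimage \<open>Z\<close> of \<open>Z(G/\<gamma>\<^sub>5)\<close> lies strictly between \<open>\<gamma>\<^sub>4\<close> and \<open>\<gamma>\<^sub>3\<close>, so \<open>|Z| = p\<^sup>3\<close>, and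
  \<open>Z = Z\<^sub>2(G)\<close> because \<open>Z(G) = \<gamma>\<^sub>5\<close>. Some \<open>x = u\<^sup>k v\<^sup>l \<notin> \<gamma>\<^sub>4\<close> lies in \<open>Z\<close>; for \<open>g\<^sub>0 = a\<^sup>k b\<^sup>l\<close>
  the commutator \<open>t = [c, g\<^sub>0]\<close> is \<open>x\<close> modulo \<open>\<gamma>\<^sub>4\<close>, and \<open>t w\<close> with \<open>w \<in> \<gamma>\<^sub>4 \<setminus> \<gamma>\<^sub>5\<close> is not a
  commutator. Finally \<open>[b x\<^sub>1, a x\<^sub>2\<^sup>-\<^sup>1] = [b, a][x\<^sub>1, a][x\<^sub>2, b]\<close> writes every element of \<open>\<gamma>\<^sub>2\<close> as a
  product of two commutators.
\<close>

section \<open>Commutator calculus\<close>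

context group
begin

lemma mult_inv_cancel_left [simp]:
  "x \<in> carrier G \<Longrightarrow> y \<in> carrier G \<Longrightarrow> x \<otimes> (inv x \<otimes> y) = y"
  by (simp add: m_assoc[symmetric])

lemma inv_mult_cancel_left [simp]:
  "x \<in> carrier G \<Longrightarrow> y \<in> carrier G \<Longrightarrow> inv x \<otimes> (x \<otimes> y) = y"
  by (simp add: m_assoc[symmetric])

lemma comm_closed [simp]:
  "x \<in> carrier G \<Longrightarrow> y \<in> carrier G \<Longrightarrow> comm G x y \<in> carrier G"
  by (simp add: comm_def)

lemma comm_one_left [simp]: "g \<in> carrier G \<Longrightarrow> comm G \<one> g = \<one>"
  by (simp add: comm_def)

lemma comm_one_right [simp]: "g \<in> carrier G \<Longrightarrow> comm G g \<one> = \<one>"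
  by (simp add: comm_def)

lemma comm_self [simp]: "g \<in> carrier G \<Longrightarrow> comm G g g = \<one>"
  by (simp add: comm_def m_assoc)

lemma inv_comm: "x \<in> carrier G \<Longrightarrow> y \<in> carrier G \<Longrightarrow> inv (comm G x y) = comm G y x"
  by (simp add: comm_def inv_mult_group m_assoc)

lemma comm_eq_one_iff:
  assumes "x \<in> carrier G" "y \<in> carrier G"
  shows "comm G x y = \<one> \<longleftrightarrow> x \<otimes> y = y \<otimes> x"
proof -
  have "comm G x y = inv (y \<otimes> x) \<otimes> (x \<otimes> y)"
    using assms by (simp add: comm_def inv_mult_group m_assoc)
  moreover have "inv u \<otimes> v = \<one> \<longleftrightarrow> v = u" if "u \<in> carrier G" "v \<in> carrier G" for u v
  proof
    assume "inv u \<otimes> v = \<one>"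
    then have "u \<otimes> (inv u \<otimes> v) = u" using that by simp
    then show "v = u" using that by simp
  qed (use that in simp)
  ultimately show ?thesis using assms by auto
qed

lemma comm_nat_pow_self: "g \<in> carrier G \<Longrightarrow> comm G g (g [^] (i::nat)) = \<one>"
  using comm_eq_one_iff[of g "g [^] i"] nat_pow_comm[of g 1 i] by simp

lemma mult_eq_mult_comm: "x \<in> carrier G \<Longrightarrow> y \<in> carrier G \<Longrightarrow> x \<otimes> y = y \<otimes> x \<otimes> comm G x y"
  by (simp add: comm_def m_assoc)

lemma conj_eq_mult_comm: "x \<in> carrier G \<Longrightarrow> g \<in> carrier G \<Longrightarrow> inv g \<otimes> x \<otimes> g = x \<otimes> comm G x g"
  by (simp add: comm_def m_assoc)

lemma comm_mult_left:
  "\<lbrakk>x \<in> carrier G; y \<in> carrier G; z \<in> carrier G\<rbrakk> \<Longrightarrow>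
    comm G (x \<otimes> y) z = inv y \<otimes> comm G x z \<otimes> y \<otimes> comm G y z"
  by (simp add: comm_def inv_mult_group m_assoc)

lemma comm_mult_right:
  "\<lbrakk>x \<in> carrier G; y \<in> carrier G; z \<in> carrier G\<rbrakk> \<Longrightarrow>
    comm G x (y \<otimes> z) = comm G x z \<otimes> inv z \<otimes> comm G x y \<otimes> z"
  by (simp add: comm_def inv_mult_group m_assoc)

lemma comm_mult_right_expand:
  "\<lbrakk>x \<in> carrier G; y \<in> carrier G; z \<in> carrier G\<rbrakk> \<Longrightarrow>
    comm G x (y \<otimes> z) = comm G x z \<otimes> (comm G x y \<otimes> comm G (comm G x y) z)"
  by (simp add: comm_def m_assoc inv_mult_group)

lemma comm_inv_left:
  "g \<in> carrier G \<Longrightarrow> h \<in> carrier G \<Longrightarrow> comm G (inv g) h = g \<otimes> comm G h g \<otimes> inv g"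
  by (simp add: comm_def m_assoc)

lemma conj_nat_pow:
  assumes x: "x \<in> carrier G" and t: "t \<in> carrier G"
  shows "x \<otimes> t [^] (k::nat) \<otimes> inv x = (x \<otimes> t \<otimes> inv x) [^] k"
proof (induct k)
  case (Suc k)
  have "x \<otimes> t [^] Suc k \<otimes> inv x = (x \<otimes> t [^] k \<otimes> inv x) \<otimes> (x \<otimes> t \<otimes> inv x)"
    using x t by (simp add: m_assoc)
  then show ?case using Suc by simp
qed (use x in simp)

lemma subgroup_nat_pow_closed: "subgroup H G \<Longrightarrow> h \<in> H \<Longrightarrow> h [^] (n::nat) \<in> H"
  by (induct n) (auto intro: subgroup.m_closed subgroup.one_closed)

lemma subgroup_mem_of_coprime_pows:
  assumes H: "subgroup H G" and x: "x \<in> carrier G" and xm: "x [^] m \<in> H" and xn: "x [^] n \<in> H"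
    and cop: "coprime m n" and "m \<noteq> (0::nat)"
  shows "x \<in> H"
proof -
  obtain u v where "m * u = n * v + gcd m n" using bezout_nat[OF \<open>m \<noteq> 0\<close>] by blast
  then have uv: "m * u = Suc (n * v)" using cop by simp
  have mu: "x [^] (m * u) \<in> H" using subgroup_nat_pow_closed[OF H xm, of u] by (simp add: nat_pow_pow[OF x])
  have nv: "x [^] (n * v) \<in> H" using subgroup_nat_pow_closed[OF H xn, of v] by (simp add: nat_pow_pow[OF x])
  have "x = inv (x [^] (n * v)) \<otimes> x [^] (m * u)"
    unfolding uv using x by simp
  then show ?thesis
    using subgroup.m_closed[OF H subgroup.m_inv_closed[OF H nv] mu] by simp
qed

lemma nat_pow_mod_eq:
  assumes t: "t \<in> carrier G" and "t [^] (p::nat) = \<one>"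
  shows "t [^] (k::nat) = t [^] (k mod p)"
proof -
  have "t [^] k = (t [^] p) [^] (k div p) \<otimes> t [^] (k mod p)"
    using t by (simp add: nat_pow_mult nat_pow_pow)
  with assms show ?thesis by simp
qed

lemma normal_comm_closed: "N \<lhd> G \<Longrightarrow> x \<in> N \<Longrightarrow> g \<in> carrier G \<Longrightarrow> comm G x g \<in> N"
proof -
  assume N: "N \<lhd> G" and x: "x \<in> N" and g: "g \<in> carrier G"
  have sg: "subgroup N G" using N by (rule normal_imp_subgroup)
  have "comm G x g = inv x \<otimes> (inv g \<otimes> x \<otimes> g)"
    using subgroup.mem_carrier[OF sg x] g by (simp add: comm_def m_assoc)
  then show ?thesis
    using subgroup.m_closed[OF sg subgroup.m_inv_closed[OF sg x] normal.inv_op_closed1[OF N g x]]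
    by simp
qed

lemma comm_in_normal_mult_left:
  assumes N: "N \<lhd> G" and g1: "g1 \<in> carrier G" and g2: "g2 \<in> carrier G" and h: "h \<in> carrier G"
    and "comm G g1 h \<in> N" and "comm G g2 h \<in> N"
  shows "comm G (g1 \<otimes> g2) h \<in> N"
proof -
  have "inv g2 \<otimes> comm G g1 h \<otimes> g2 \<in> N" using normal.inv_op_closed1[OF N g2] assms by simp
  then show ?thesis
    using subgroup.m_closed[OF normal_imp_subgroup[OF N]] comm_mult_left[OF g1 g2 h] assms by simp
qed

lemma comm_in_normal_mult_right:
  assumes N: "N \<lhd> G" and g1: "g1 \<in> carrier G" and g2: "g2 \<in> carrier G" and h: "h \<in> carrier G"
    and "comm G h g1 \<in> N" and "comm G h g2 \<in> N"
  shows "comm G h (g1 \<otimes> g2) \<in> N"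
proof -
  have "inv g2 \<otimes> comm G h g1 \<otimes> g2 \<in> N" using normal.inv_op_closed1[OF N g2] assms by simp
  then have "comm G h g2 \<otimes> (inv g2 \<otimes> comm G h g1 \<otimes> g2) \<in> N"
    using subgroup.m_closed[OF normal_imp_subgroup[OF N]] assms by simp
  then show ?thesis using comm_mult_right[OF h g1 g2] g1 g2 h by (simp add: m_assoc)
qed

lemma comm_in_normal_swap:
  assumes N: "N \<lhd> G" and g: "g \<in> carrier G" and h: "h \<in> carrier G" and c: "comm G g h \<in> N"
  shows "comm G h g \<in> N"
  using subgroup.m_inv_closed[OF normal_imp_subgroup[OF N] c] inv_comm[OF g h] by simp

lemma comm_in_normal_pow_left:
  assumes N: "N \<lhd> G" and g: "g \<in> carrier G" and h: "h \<in> carrier G" and c: "comm G g h \<in> N"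
  shows "comm G (g [^] (k::nat)) h \<in> N"
proof (induct k)
  case 0
  then show ?case using h subgroup.one_closed[OF normal_imp_subgroup[OF N]] by simp
next
  case (Suc k)
  then show ?case using comm_in_normal_mult_left[OF N _ g h Suc c] g by simp
qed

lemma comm_in_normal_pow_right:
  assumes N: "N \<lhd> G" and g: "g \<in> carrier G" and h: "h \<in> carrier G" and c: "comm G h g \<in> N"
  shows "comm G h (g [^] (k::nat)) \<in> N"
  using comm_in_normal_swap[OF N _ h comm_in_normal_pow_left[OF N g h comm_in_normal_swap[OF N h g c]]] g
  by simp

section \<open>The lower central series\<close>

lemma comm_subgroup_normal:
  assumes N: "N \<lhd> G"
  shows "comm_subgroup G N (carrier G) \<lhd> G"
  unfolding comm_subgroup_def
proof (rule normal_generateI)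
  have sg: "subgroup N G" using N by (rule normal_imp_subgroup)
  show "{comm G a b |a b. a \<in> N \<and> b \<in> carrier G} \<subseteq> carrier G"
    using sg by (auto dest: subgroup.mem_carrier)
  fix h g
  assume "h \<in> {comm G a b |a b. a \<in> N \<and> b \<in> carrier G}" and g: "g \<in> carrier G"
  then obtain x y where h: "h = comm G x y" and x: "x \<in> N" and y: "y \<in> carrier G" by blast
  have xc: "x \<in> carrier G" using subgroup.mem_carrier[OF sg x] .
  have "g \<otimes> h \<otimes> inv g = comm G (g \<otimes> x \<otimes> inv g) (g \<otimes> y \<otimes> inv g)"
    unfolding h using y xc g by (simp add: comm_def m_assoc inv_mult_group)
  moreover have "g \<otimes> x \<otimes> inv g \<in> N" using normal.inv_op_closed2[OF N g x] .
  ultimately show "g \<otimes> h \<otimes> inv g \<in> {comm G a b |a b. a \<in> N \<and> b \<in> carrier G}"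
    using g y by blast
qed

lemma lcs_normal: "lcs G n \<lhd> G"
  by (induct n) (simp_all add: normal_self comm_subgroup_normal)

lemma lcs_subgroup: "subgroup (lcs G n) G"
  using lcs_normal by (rule normal_imp_subgroup)

lemma lcs_subset_carrier: "lcs G n \<subseteq> carrier G"
  using lcs_subgroup by (rule subgroup.subset)

lemma lcs_carrier: "x \<in> lcs G n \<Longrightarrow> x \<in> carrier G"
  using lcs_subset_carrier by (rule subsetD)

lemma lcs_one_closed: "\<one> \<in> lcs G n"
  using lcs_subgroup by (rule subgroup.one_closed)

lemma lcs_comm_closed: "x \<in> lcs G n \<Longrightarrow> g \<in> carrier G \<Longrightarrow> comm G x g \<in> lcs G (Suc n)"
  by (auto simp: comm_subgroup_def intro: generate.incl)

lemma lcs_Suc_least: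
  assumes "subgroup H G" "\<And>x g. x \<in> lcs G n \<Longrightarrow> g \<in> carrier G \<Longrightarrow> comm G x g \<in> H"
  shows "lcs G (Suc n) \<subseteq> H"
  unfolding lcs.simps comm_subgroup_def
  by (rule generate_subgroup_incl) (use assms in auto)

lemma lcs_Suc_subset: "lcs G (Suc n) \<subseteq> lcs G n"
  by (rule lcs_Suc_least[OF lcs_subgroup]) (rule normal_comm_closed[OF lcs_normal])

lemma lcs_antimono: "m \<le> n \<Longrightarrow> lcs G n \<subseteq> lcs G m"
proof (induct n rule: dec_induct)
  case (step n)
  then show ?case using lcs_Suc_subset[of n] by (meson order_trans)
qed simp

lemma lcs_stable: "lcs G (Suc n) = lcs G n \<Longrightarrow> lcs G (n + k) = lcs G n"
proof (induct k)
  case (Suc k)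
  have "lcs G (n + Suc k) = comm_subgroup G (lcs G (n + k)) (carrier G)" by simp
  also have "\<dots> = lcs G (Suc n)" using Suc by simp
  finally show ?case using Suc by simp
qed simp

lemma normal_if_derived_subset:
  assumes H: "subgroup H G" and D: "lcs G 1 \<subseteq> H"
  shows "H \<lhd> G"
proof (rule normal_invI[OF H])
  fix x h
  assume x: "x \<in> carrier G" and h: "h \<in> H"
  have hc: "h \<in> carrier G" using subgroup.mem_carrier[OF H h] .
  have "comm G h (inv x) \<in> H" using D lcs_comm_closed[of h 0 "inv x"] x hc by auto
  then have "h \<otimes> comm G h (inv x) \<in> H" using subgroup.m_closed[OF H h] by simp
  moreover have "h \<otimes> comm G h (inv x) = x \<otimes> h \<otimes> inv x" using x hc by (simp add: comm_def m_assoc)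
  ultimately show "x \<otimes> h \<otimes> inv x \<in> H" by simp
qed

end

declare lcs.simps(2) [simp del]

section \<open>Products of subsets and cyclic extensions\<close>

definition cyclic_ext :: "('a, 'b) monoid_scheme \<Rightarrow> 'a \<Rightarrow> 'a set \<Rightarrow> 'a set" where
  "cyclic_ext G t N = {t [^]\<^bsub>G\<^esub> (k::nat) \<otimes>\<^bsub>G\<^esub> n | k n. n \<in> N}"

context group
begin

lemma set_multI: "h \<in> H \<Longrightarrow> k \<in> K \<Longrightarrow> h \<otimes> k \<in> H <#> K"
  unfolding set_mult_def by blast

lemma set_multE: "x \<in> H <#> K \<Longrightarrow> (\<And>h k. h \<in> H \<Longrightarrow> k \<in> K \<Longrightarrow> x = h \<otimes> k \<Longrightarrow> P) \<Longrightarrow> P"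
  unfolding set_mult_def by blast

lemma set_mult_subset_subgroup:
  "subgroup M G \<Longrightarrow> H \<subseteq> M \<Longrightarrow> K \<subseteq> M \<Longrightarrow> H <#> K \<subseteq> M"
  by (auto elim!: set_multE intro: subgroup.m_closed)

lemma cyclic_extI: "n \<in> N \<Longrightarrow> t [^] (k::nat) \<otimes> n \<in> cyclic_ext G t N"
  unfolding cyclic_ext_def by blast

lemma cyclic_extE:
  "x \<in> cyclic_ext G t N \<Longrightarrow> (\<And>k n. n \<in> N \<Longrightarrow> x = t [^] (k::nat) \<otimes> n \<Longrightarrow> P) \<Longrightarrow> P"
  unfolding cyclic_ext_def by blast

lemma cyclic_ext_mono: "N \<subseteq> N' \<Longrightarrow> cyclic_ext G t N \<subseteq> cyclic_ext G t N'"
  unfolding cyclic_ext_def by blast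

lemma subset_cyclic_ext: "N \<subseteq> carrier G \<Longrightarrow> N \<subseteq> cyclic_ext G t N"
  using cyclic_extI[of _ N t 0] by (auto simp: subsetD)

lemma nat_pow_in_cyclic_ext: "t \<in> carrier G \<Longrightarrow> \<one> \<in> N \<Longrightarrow> t [^] (k::nat) \<in> cyclic_ext G t N"
  using cyclic_extI[of "\<one>" N t k] by simp

lemma gen_in_cyclic_ext: "t \<in> carrier G \<Longrightarrow> \<one> \<in> N \<Longrightarrow> t \<in> cyclic_ext G t N"
  using nat_pow_in_cyclic_ext[of t N 1] by simp

lemma cyclic_ext_subset_carrier:
  "t \<in> carrier G \<Longrightarrow> N \<subseteq> carrier G \<Longrightarrow> cyclic_ext G t N \<subseteq> carrier G"
  by (auto elim!: cyclic_extE)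

lemma cyclic_ext_subset_subgroup:
  assumes H: "subgroup H G" and "t \<in> H" and "N \<subseteq> H"
  shows "cyclic_ext G t N \<subseteq> H"
  using assms subgroup.m_closed[OF H] subgroup_nat_pow_closed[OF H]
  by (auto elim!: cyclic_extE)

lemma inv_nat_pow_eq_nat_pow:
  assumes fin: "finite (carrier G)" and t: "t \<in> carrier G"
  shows "inv (t [^] (i::nat)) = t [^] (i * (order G - 1))"
proof (rule inv_equality)
  have "order G \<ge> 1" using fin order_gt_0_iff_finite by (simp add: Suc_le_eq)
  then have "i * (order G - 1) + i = order G * i" by (simp add: algebra_simps)
  then have "t [^] (i * (order G - 1)) \<otimes> t [^] i = (t [^] order G) [^] i"
    using t by (simp add: nat_pow_mult nat_pow_pow)
  then show "t [^] (i * (order G - 1)) \<otimes> t [^] i = \<one>" using pow_order_eq_1[OF t] by simp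
qed (use t in simp_all)

lemma cyclic_ext_subgroup:
  assumes fin: "finite (carrier G)" and N: "N \<lhd> G" and t: "t \<in> carrier G"
  shows "subgroup (cyclic_ext G t N) G"
proof -
  have sg: "subgroup N G" using N by (rule normal_imp_subgroup)
  have Nc: "\<And>n. n \<in> N \<Longrightarrow> n \<in> carrier G" using subgroup.mem_carrier[OF sg] .
  show ?thesis
  proof
    show "cyclic_ext G t N \<subseteq> carrier G"
      using cyclic_ext_subset_carrier[OF t subgroup.subset[OF sg]] .
    show "\<one> \<in> cyclic_ext G t N"
      using subset_cyclic_ext[OF subgroup.subset[OF sg]] subgroup.one_closed[OF sg] by blast
  next
    fix x y
    assume "x \<in> cyclic_ext G t N" "y \<in> cyclic_ext G t N"
    then obtain i j n m where n: "n \<in> N" and x: "x = t [^] (i::nat) \<otimes> n"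
      and m: "m \<in> N" and y: "y = t [^] (j::nat) \<otimes> m"
      by (auto elim!: cyclic_extE)
    have "x \<otimes> y = t [^] (i + j) \<otimes> ((inv (t [^] j) \<otimes> n \<otimes> t [^] j) \<otimes> m)"
      unfolding x y using Nc n m t by (simp add: m_assoc nat_pow_mult[symmetric])
    moreover have "inv (t [^] j) \<otimes> n \<otimes> t [^] j \<in> N" using normal.inv_op_closed1[OF N _ n] t by simp
    ultimately show "x \<otimes> y \<in> cyclic_ext G t N"
      using subgroup.m_closed[OF sg _ m] cyclic_extI by simp
  next
    fix x
    assume "x \<in> cyclic_ext G t N"
    then obtain i n where n: "n \<in> N" and x: "x = t [^] (i::nat) \<otimes> n" by (rule cyclic_extE)
    have "inv x = inv (t [^] i) \<otimes> (t [^] i \<otimes> inv n \<otimes> inv (t [^] i))"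
      unfolding x using Nc n t by (simp add: m_assoc inv_mult_group)
    moreover have "t [^] i \<otimes> inv n \<otimes> inv (t [^] i) \<in> N"
      using normal.inv_op_closed2[OF N _ subgroup.m_inv_closed[OF sg n]] t by simp
    ultimately show "inv x \<in> cyclic_ext G t N"
      unfolding inv_nat_pow_eq_nat_pow[OF fin t] by (simp add: cyclic_extI)
  qed
qed

lemma card_cyclic_ext_le:
  assumes t: "t \<in> carrier G" and tp: "t [^] (p::nat) = \<one>" and fin: "finite N" and "p > 0"
  shows "card (cyclic_ext G t N) \<le> p * card N"
proof -
  have "cyclic_ext G t N \<subseteq> (\<lambda>(k, n). t [^] (k::nat) \<otimes> n) ` ({..<p} \<times> N)"
  proof
    fix x
    assume "x \<in> cyclic_ext G t N"
    then obtain k n where n: "n \<in> N" and x: "x = t [^] (k::nat) \<otimes> n" by (rule cyclic_extE)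
    then have "x = (\<lambda>(k, n). t [^] (k::nat) \<otimes> n) (k mod p, n)"
      using nat_pow_mod_eq[OF t tp, of k] by simp
    moreover have "(k mod p, n) \<in> {..<p} \<times> N" using n \<open>p > 0\<close> by simp
    ultimately show "x \<in> (\<lambda>(k, n). t [^] (k::nat) \<otimes> n) ` ({..<p} \<times> N)" by (rule image_eqI)
  qed
  then have "card (cyclic_ext G t N) \<le> card ((\<lambda>(k, n). t [^] (k::nat) \<otimes> n) ` ({..<p} \<times> N))"
    using fin by (intro card_mono) auto
  also have "\<dots> \<le> card ({..<p} \<times> N)" by (rule card_image_le) (use fin in simp)
  finally show ?thesis by (simp add: card_cartesian_product)
qed

end

section \<open>Finite \<open>p\<close>-groups\<close>

lemma (in group) card_subgroup_dvd:
  assumes H: "subgroup H G" and K: "subgroup K G" and "H \<subseteq> K"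
  shows "card H dvd card K"
proof -
  interpret K: group "G\<lparr>carrier := K\<rparr>" using subgroup.subgroup_is_group[OF K is_group] .
  have "subgroup H (G\<lparr>carrier := K\<rparr>)" using subgroup_incl[OF H K \<open>H \<subseteq> K\<close>] .
  then have "card (rcosets\<^bsub>G\<lparr>carrier := K\<rparr>\<^esub> H) * card H = card K"
    using K.lagrange by (simp add: order_def)
  then show ?thesis by (metis dvd_triv_right)
qed

locale p_group = group +
  fixes p n :: nat
  assumes prime_p: "Factorial_Ring.prime p" and card_carrier: "card (carrier G) = p ^ n"
begin

lemma p_gt_1: "p > 1"
  using prime_p by (rule prime_gt_1_nat)

lemma finite_carrier: "finite (carrier G)"
proof -
  have "card (carrier G) > 0" using card_carrier p_gt_1 by simp
  then show ?thesis by (rule card_ge_0_finite)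
qed

lemma finite_subset_carrier: "H \<subseteq> carrier G \<Longrightarrow> finite H"
  using finite_carrier finite_subset by blast

lemma subset_eq_if_card_le: "H \<subseteq> K \<Longrightarrow> K \<subseteq> carrier G \<Longrightarrow> card K \<le> card H \<Longrightarrow> H = K"
  using card_seteq finite_subset_carrier by blast

lemma card_subgroup:
  assumes "subgroup H G"
  shows "\<exists>i\<le>n. card H = p ^ i"
proof -
  have "card H dvd p ^ n"
    using card_subgroup_dvd[OF assms subgroup_self subgroup.subset[OF assms]] card_carrier by simp
  then show ?thesis using divides_primepow_nat[OF prime_p] by simp
qed

lemma card_psubgroup:
  assumes H: "subgroup H G" and K: "subgroup K G" and "H \<subseteq> K" and "H \<noteq> K"
  shows "p * card H \<le> card K"
proof -
  obtain i j where i: "card H = p ^ i" and j: "card K = p ^ j"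
    using card_subgroup[OF H] card_subgroup[OF K] by blast
  have "card H < card K"
    using assms finite_subset_carrier[OF subgroup.subset[OF K]] by (meson psubsetI psubset_card_mono)
  then have "Suc i \<le> j" using i j p_gt_1 by simp
  then have "p ^ Suc i \<le> p ^ j" using p_gt_1 by (simp only: power_increasing_iff)
  then show ?thesis using i j by simp
qed

lemma cyclic_ext_eq_if_card_le:
  assumes H: "subgroup H G" and N: "N \<lhd> G" and "N \<subseteq> H" and card: "card H \<le> p * card N"
    and x: "x \<in> H" "x \<notin> N"
  shows "cyclic_ext G x N = H"
proof -
  have sg: "subgroup N G" using N by (rule normal_imp_subgroup)
  have xc: "x \<in> carrier G" using subgroup.mem_carrier[OF H x(1)] .
  have S: "subgroup (cyclic_ext G x N) G" using cyclic_ext_subgroup[OF finite_carrier N xc] .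
  have "N \<noteq> cyclic_ext G x N" using gen_in_cyclic_ext[OF xc subgroup.one_closed[OF sg]] x(2) by blast
  then have "p * card N \<le> card (cyclic_ext G x N)"
    using card_psubgroup[OF sg S subset_cyclic_ext[OF subgroup.subset[OF sg]]] by simp
  then show ?thesis
    using subset_eq_if_card_le[OF cyclic_ext_subset_subgroup[OF H x(1) \<open>N \<subseteq> H\<close>] subgroup.subset[OF H]]
      card by simp
qed

lemma coprime_if_not_dvd: "\<not> p dvd k \<Longrightarrow> coprime k p"
  using prime_imp_coprime[OF prime_p] by (simp add: coprime_commute)

lemma mem_subgroup_if_nat_pows:
  assumes K: "subgroup K G" and g: "g \<in> carrier G" and "g [^] p \<in> K" and "g [^] m \<in> K"
    and "\<not> p dvd m"
  shows "g \<in> K"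
proof -
  have "m \<noteq> 0" using \<open>\<not> p dvd m\<close> by (metis dvd_0_right)
  then show ?thesis
    using subgroup_mem_of_coprime_pows[OF K g assms(4,3) coprime_if_not_dvd[OF \<open>\<not> p dvd m\<close>]] by blast
qed

lemma nat_pow_prime_in_normal:
  assumes N: "N \<lhd> G" and g: "g \<in> carrier G" and card: "card (cyclic_ext G g N) \<le> p * card N"
  shows "g [^] p \<in> N"
proof (rule ccontr)
  assume np: "g [^] p \<notin> N"
  have sg: "subgroup N G" using N by (rule normal_imp_subgroup)
  have "g [^] p \<in> cyclic_ext G g N" using nat_pow_in_cyclic_ext[OF g subgroup.one_closed[OF sg]] .
  then have "cyclic_ext G (g [^] p) N = cyclic_ext G g N"
    using cyclic_ext_eq_if_card_le[OF cyclic_ext_subgroup[OF finite_carrier N g] N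
        subset_cyclic_ext[OF subgroup.subset[OF sg]] card _ np] by blast
  then have "g \<in> cyclic_ext G (g [^] p) N"
    using gen_in_cyclic_ext[OF g subgroup.one_closed[OF sg]] by simp
  then obtain i m where m: "m \<in> N" and gi: "g = (g [^] p) [^] (i::nat) \<otimes> m" by (rule cyclic_extE)
  have mc: "m \<in> carrier G" using subgroup.mem_carrier[OF sg m] .
  have "g \<in> N"
  proof (cases "i = 0")
    case True
    then show ?thesis using gi mc m by simp
  next
    case False
    \<comment> \<open>\<open>g = g\<^sup>p\<^sup>i m\<close> gives \<open>g\<^sup>p\<^sup>i\<^sup>-\<^sup>1 \<in> N\<close>, and \<open>p i - 1\<close> is prime to \<open>p\<^sup>n = |G|\<close>.\<close>
    define e where "e = p * i - 1"
    have pi: "p * i = Suc e" unfolding e_def using False p_gt_1 by (simp add: Suc_le_eq)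
    have "g = g [^] e \<otimes> g \<otimes> m" using gi g by (simp add: nat_pow_pow pi)
    also have "\<dots> = g \<otimes> (g [^] e \<otimes> m)" using g mc nat_pow_comm[OF g, of e 1] by (simp add: m_assoc)
    finally have "g \<otimes> \<one> = g \<otimes> (g [^] e \<otimes> m)" using g by simp
    then have "\<one> = g [^] e \<otimes> m" using g mc by (metis l_cancel nat_pow_closed m_closed one_closed)
    then have "g [^] e = inv m" using g mc by (metis inv_equality nat_pow_closed)
    then have ge: "g [^] e \<in> N" using subgroup.m_inv_closed[OF sg m] by simp
    have gn: "g [^] (p ^ n) \<in> N"
      using pow_order_eq_1[OF g] card_carrier subgroup.one_closed[OF sg] by (simp add: order_def)
    have "\<not> p dvd e"
    proof
      assume "p dvd e"
      moreover have "p dvd Suc e" unfolding pi[symmetric] by simp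
      ultimately have "p dvd 1" using dvd_diff_nat[of p "Suc e" e] by simp
      then show False using p_gt_1 by simp
    qed
    then have "coprime (p ^ n) e"
      using coprime_if_not_dvd by (simp add: coprime_commute)
    then show ?thesis using subgroup_mem_of_coprime_pows[OF sg g gn ge] p_gt_1 by simp
  qed
  then show False using np subgroup_nat_pow_closed[OF sg] by blast
qed

end

section \<open>Metabelian groups\<close>

locale metabelian_group = group +
  assumes derived_comm: "\<lbrakk>x \<in> lcs G 1; y \<in> lcs G 1\<rbrakk> \<Longrightarrow> x \<otimes> y = y \<otimes> x"
begin

lemma derived_left_comm:
  "\<lbrakk>x \<in> lcs G 1; y \<in> lcs G 1; z \<in> carrier G\<rbrakk> \<Longrightarrow> x \<otimes> (y \<otimes> z) = y \<otimes> (x \<otimes> z)"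
  by (simp add: m_assoc[symmetric] derived_comm lcs_carrier)

lemmas derived_ac = m_assoc derived_comm derived_left_comm

lemma derived_mult_closed: "x \<in> lcs G 1 \<Longrightarrow> y \<in> lcs G 1 \<Longrightarrow> x \<otimes> y \<in> lcs G 1"
  by (rule subgroup.m_closed[OF lcs_subgroup])

lemma derived_inv_closed: "x \<in> lcs G 1 \<Longrightarrow> inv x \<in> lcs G 1"
  by (rule subgroup.m_inv_closed[OF lcs_subgroup])

lemma derived_nat_pow_closed: "x \<in> lcs G 1 \<Longrightarrow> x [^] (k::nat) \<in> lcs G 1"
  by (rule subgroup_nat_pow_closed[OF lcs_subgroup])

text \<open>The simplifier rewrites \<open>lcs G 1\<close> to \<open>lcs G (Suc 0)\<close>; the closure rules are stored in that
  form so that they can discharge the side conditions of \<open>derived_ac\<close>.\<close>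

lemmas derived_closed [simplified] = derived_mult_closed derived_inv_closed derived_nat_pow_closed

lemma comm_derived_eq_one: "x \<in> lcs G 1 \<Longrightarrow> y \<in> lcs G 1 \<Longrightarrow> comm G x y = \<one>"
  using comm_eq_one_iff[OF lcs_carrier lcs_carrier] derived_comm by simp

lemma conj_derived_eq: "x \<in> lcs G 1 \<Longrightarrow> y \<in> lcs G 1 \<Longrightarrow> inv y \<otimes> x \<otimes> y = x"
  using derived_comm[of x y] lcs_carrier by (simp add: m_assoc)

lemma nat_pow_mult_derived:
  "x \<in> lcs G 1 \<Longrightarrow> y \<in> lcs G 1 \<Longrightarrow> (x \<otimes> y) [^] (k::nat) = x [^] k \<otimes> y [^] k"
  using pow_mult_distrib[OF derived_comm lcs_carrier lcs_carrier] by simp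

lemma lcs_Suc_subset_derived: "lcs G (Suc n) \<subseteq> lcs G 1"
  using lcs_antimono[of 1 "Suc n"] by simp

lemma comm_in_derived: "x \<in> carrier G \<Longrightarrow> g \<in> carrier G \<Longrightarrow> comm G x g \<in> lcs G 1"
  using lcs_comm_closed[of x 0 g] by simp

lemma comm_derived_in_lcs2: "x \<in> lcs G 1 \<Longrightarrow> g \<in> carrier G \<Longrightarrow> comm G x g \<in> lcs G 2"
  using lcs_comm_closed[of x 1 g] by (simp add: numeral_2_eq_2)

lemma comm_mult_derived_left:
  assumes x: "x \<in> lcs G 1" and y: "y \<in> lcs G 1" and g: "g \<in> carrier G"
  shows "comm G (x \<otimes> y) g = comm G x g \<otimes> comm G y g"
proof -
  have "comm G x g \<in> lcs G 1" using comm_in_derived lcs_carrier x g by blast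
  then have "inv y \<otimes> comm G x g \<otimes> y = comm G x g" using conj_derived_eq y by blast
  then show ?thesis using comm_mult_left[OF lcs_carrier[OF x] lcs_carrier[OF y] g] by simp
qed

lemma comm_inv_derived_left:
  assumes x: "x \<in> lcs G 1" and g: "g \<in> carrier G"
  shows "comm G (inv x) g = inv (comm G x g)"
proof -
  have xc: "x \<in> carrier G" using lcs_carrier[OF x] .
  have "\<one> = comm G x g \<otimes> comm G (inv x) g"
    using comm_mult_derived_left[OF x subgroup.m_inv_closed[OF lcs_subgroup x] g] xc g by simp
  then show ?thesis using xc g by (metis comm_closed inv_closed inv_comm inv_equality)
qed

lemma comm_mult_derived_right:
  assumes x: "x \<in> lcs G 1" and h: "h \<in> carrier G" and y: "y \<in> lcs G 1"
  shows "comm G x (h \<otimes> y) = comm G x h"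
proof -
  have q: "comm G x h \<in> lcs G 1" using comm_in_derived lcs_carrier[OF x] h by simp
  have "comm G x (h \<otimes> y) = comm G x y \<otimes> (inv y \<otimes> comm G x h \<otimes> y)"
    using comm_mult_right[OF lcs_carrier[OF x] h lcs_carrier[OF y]] lcs_carrier[OF x] lcs_carrier[OF y] h
    by (simp add: m_assoc)
  then show ?thesis using comm_derived_eq_one[OF x y] conj_derived_eq[OF q y] lcs_carrier[OF q] by simp
qed

lemma comm_nat_pow_derived_left:
  assumes x: "x \<in> lcs G 1" and g: "g \<in> carrier G"
  shows "comm G (x [^] (k::nat)) g = (comm G x g) [^] k"
proof (induct k)
  case (Suc k)
  then show ?case
    using comm_mult_derived_left[OF subgroup_nat_pow_closed[OF lcs_subgroup x] x g] by simp
qed (use g in simp)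

lemma comm_pow_mult_derived_left:
  "\<lbrakk>t \<in> lcs G 1; m \<in> lcs G 1; g \<in> carrier G\<rbrakk> \<Longrightarrow>
    comm G (t [^] (k::nat) \<otimes> m) g = (comm G t g) [^] k \<otimes> comm G m g"
  using comm_mult_derived_left[OF subgroup_nat_pow_closed[OF lcs_subgroup]] comm_nat_pow_derived_left
  by simp

lemma comm_in_cyclic_ext:
  assumes K: "subgroup K G" and t: "t \<in> lcs G 1" and M: "M \<subseteq> lcs G 1" and g: "g \<in> carrier G"
    and "comm G t g \<in> K" and "\<And>m. m \<in> M \<Longrightarrow> comm G m g \<in> K" and y: "y \<in> cyclic_ext G t M"
  shows "comm G y g \<in> K"
proof -
  obtain k m where m: "m \<in> M" and "y = t [^] (k::nat) \<otimes> m" using y by (rule cyclic_extE)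
  then have "comm G y g = (comm G t g) [^] k \<otimes> comm G m g"
    using comm_pow_mult_derived_left[OF t _ g] M by blast
  then show ?thesis using assms subgroup.m_closed[OF K subgroup_nat_pow_closed[OF K]] m by simp
qed

text \<open>With \<open>x\<^sup>k = k\<^sup>-\<^sup>1 x k\<close> one has \<open>[[x, g], h] = (x\<^sup>g)\<^sup>-\<^sup>1 x (x\<^sup>h)\<^sup>-\<^sup>1 x\<^sup>g\<^sup>h\<close>; all factors lie in the
  abelian group \<open>\<gamma>\<^sub>2\<close>, and \<open>x\<^sup>g\<^sup>h = x\<^sup>h\<^sup>g\<close> because \<open>[g, h] \<in> \<gamma>\<^sub>2\<close> centralises \<open>x\<close>.\<close>

lemma comm_comm_swap:
  assumes x: "x \<in> lcs G 1" and g: "g \<in> carrier G" and h: "h \<in> carrier G"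
  shows "comm G (comm G x g) h = comm G (comm G x h) g"
proof -
  define cj where "cj = (\<lambda>k. inv k \<otimes> x \<otimes> k)"
  have xc: "x \<in> carrier G" using lcs_carrier[OF x] .
  have cjD: "cj k \<in> lcs G 1" if "k \<in> carrier G" for k
  proof -
    have "cj k = x \<otimes> comm G x k" unfolding cj_def using xc that by (rule conj_eq_mult_comm)
    then show ?thesis using subgroup.m_closed[OF lcs_subgroup x] comm_in_derived xc that by simp
  qed
  have key: "comm G (comm G x g) h = inv (cj g) \<otimes> (x \<otimes> (inv (cj h) \<otimes> cj (g \<otimes> h)))"
    if "g \<in> carrier G" "h \<in> carrier G" for g h
    unfolding cj_def comm_def using xc that by (simp add: m_assoc inv_mult_group)
  have "cj (g \<otimes> h) = inv (comm G g h) \<otimes> cj (h \<otimes> g) \<otimes> comm G g h"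
    unfolding mult_eq_mult_comm[OF g h] cj_def using xc g h by (simp add: m_assoc inv_mult_group)
  also have "\<dots> = cj (h \<otimes> g)" using conj_derived_eq[OF cjD comm_in_derived] g h by simp
  finally have gh: "cj (g \<otimes> h) = cj (h \<otimes> g)" .
  have i: "inv (cj g) \<in> lcs G 1" "inv (cj h) \<in> lcs G 1"
    using subgroup.m_inv_closed[OF lcs_subgroup cjD] g h by auto
  have "comm G (comm G x g) h = inv (cj g) \<otimes> (x \<otimes> (inv (cj h) \<otimes> cj (h \<otimes> g)))"
    using key[OF g h] gh by simp
  also have "\<dots> = inv (cj h) \<otimes> (x \<otimes> (inv (cj g) \<otimes> cj (h \<otimes> g)))"
    using i x cjD[of "h \<otimes> g"] g h by (simp add: derived_ac lcs_carrier)
  also have "\<dots> = comm G (comm G x h) g" using key[OF h g] by simp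
  finally show ?thesis .
qed

lemma comm_nat_pow_right_mod_lcs:
  assumes y: "y \<in> lcs G n" and n: "1 \<le> n" and g: "g \<in> carrier G"
  shows "\<exists>w \<in> lcs G (Suc (Suc n)). comm G y (g [^] (k::nat)) = (comm G y g) [^] k \<otimes> w"
proof (induct k)
  case 0
  then show ?case using lcs_one_closed lcs_carrier[OF y] by force
next
  case (Suc k)
  then obtain w where w: "w \<in> lcs G (Suc (Suc n))"
    and e: "comm G y (g [^] k) = (comm G y g) [^] k \<otimes> w" by blast
  have q: "comm G y g \<in> lcs G (Suc n)" using lcs_comm_closed[OF y g] .
  have qA: "comm G y g \<in> lcs G 1" and wA: "w \<in> lcs G 1"
    using q w lcs_Suc_subset_derived by blast+
  define w' where "w' = (comm G (comm G y g) g) [^] k \<otimes> comm G w g"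
  have "comm G w g \<in> lcs G (Suc (Suc n))"
    using lcs_comm_closed[OF w g] lcs_Suc_subset by blast
  then have w': "w' \<in> lcs G (Suc (Suc n))"
    unfolding w'_def using subgroup.m_closed[OF lcs_subgroup] lcs_comm_closed[OF q g]
      subgroup_nat_pow_closed[OF lcs_subgroup] by blast
  then have w'A: "w' \<in> lcs G 1" using lcs_Suc_subset_derived by blast
  have c2: "comm G ((comm G y g) [^] k \<otimes> w) g = w'"
    unfolding w'_def using comm_pow_mult_derived_left[OF qA wA g] .
  have "comm G y (g [^] Suc k) = comm G y g \<otimes> (comm G y (g [^] k) \<otimes> comm G (comm G y (g [^] k)) g)"
    using comm_mult_right_expand[OF lcs_carrier[OF y] _ g] g by simp
  also have "\<dots> = (comm G y g) [^] Suc k \<otimes> (w \<otimes> w')"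
    unfolding e c2 using qA wA w'A by (simp add: derived_ac derived_closed lcs_carrier)
  finally show ?case using subgroup.m_closed[OF lcs_subgroup w w'] by blast
qed

lemma comm_mult_nat_pows_right_mod_lcs:
  assumes y: "y \<in> lcs G n" and n: "1 \<le> n" and a: "a \<in> carrier G" and b: "b \<in> carrier G"
  shows "\<exists>w \<in> lcs G (Suc (Suc n)).
    comm G y (a [^] (k::nat) \<otimes> b [^] (l::nat)) = (comm G y a) [^] k \<otimes> (comm G y b) [^] l \<otimes> w"
proof -
  obtain w1 where w1: "w1 \<in> lcs G (Suc (Suc n))" "comm G y (a [^] k) = (comm G y a) [^] k \<otimes> w1"
    using comm_nat_pow_right_mod_lcs[OF y n a] by blast
  obtain w2 where w2: "w2 \<in> lcs G (Suc (Suc n))" "comm G y (b [^] l) = (comm G y b) [^] l \<otimes> w2"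
    using comm_nat_pow_right_mod_lcs[OF y n b] by blast
  define w3 where "w3 = comm G (comm G y (a [^] k)) (b [^] l)"
  have w3: "w3 \<in> lcs G (Suc (Suc n))"
    unfolding w3_def using lcs_comm_closed[OF lcs_comm_closed[OF y]] a b by simp
  have A: "comm G y a \<in> lcs G 1" "comm G y b \<in> lcs G 1" "w1 \<in> lcs G 1" "w2 \<in> lcs G 1" "w3 \<in> lcs G 1"
    using lcs_comm_closed[OF y] a b w1 w2 w3 lcs_Suc_subset_derived by blast+
  have "comm G y (a [^] k \<otimes> b [^] l) = comm G y (b [^] l) \<otimes> (comm G y (a [^] k) \<otimes> w3)"
    unfolding w3_def using comm_mult_right_expand[OF lcs_carrier[OF y]] a b by simp
  also have "\<dots> = (comm G y a) [^] k \<otimes> (comm G y b) [^] l \<otimes> (w1 \<otimes> (w2 \<otimes> w3))"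
    unfolding w1(2) w2(2) using A by (simp add: derived_ac derived_closed lcs_carrier)
  finally show ?thesis
    using subgroup.m_closed[OF lcs_subgroup w1(1) subgroup.m_closed[OF lcs_subgroup w2(1) w3]] by blast
qed

lemma comm_nat_pow_left_mod_lcs2:
  assumes g: "g \<in> carrier G" and a: "a \<in> carrier G"
  shows "\<exists>e \<in> lcs G 2. comm G (g [^] (r::nat)) a = (comm G g a) [^] r \<otimes> e"
proof (induct r)
  case 0
  then show ?case using lcs_one_closed a by force
next
  case (Suc r)
  then obtain e where e: "e \<in> lcs G 2" "comm G (g [^] r) a = (comm G g a) [^] r \<otimes> e" by blast
  define q where "q = comm G (g [^] r) a"
  have qA: "q \<in> lcs G 1" and cA: "comm G g a \<in> lcs G 1"
    unfolding q_def using comm_in_derived g a by simp_all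
  have eA: "e \<in> lcs G 1" using e(1) lcs_antimono[of 1 2] by auto
  have qg: "comm G q g \<in> lcs G 2" using comm_derived_in_lcs2[OF qA g] .
  then have qgA: "comm G q g \<in> lcs G 1" using lcs_antimono[of 1 2] by auto
  have "comm G (g [^] Suc r) a = inv g \<otimes> q \<otimes> g \<otimes> comm G g a"
    using comm_mult_left[OF _ g a, of "g [^] r"] g q_def by simp
  also have "inv g \<otimes> q \<otimes> g = q \<otimes> comm G q g" using lcs_carrier[OF qA] g by (rule conj_eq_mult_comm)
  also have "q \<otimes> comm G q g \<otimes> comm G g a = (comm G g a) [^] Suc r \<otimes> (e \<otimes> comm G q g)"
    using e(2) qgA eA cA unfolding q_def by (simp add: derived_ac derived_closed lcs_carrier)
  finally show ?case using subgroup.m_closed[OF lcs_subgroup e(1) qg] by blast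
qed

lemma comm_image_subgroup:
  assumes N: "subgroup N G" and NA: "N \<subseteq> lcs G 1" and g: "g \<in> carrier G"
  shows "subgroup ((\<lambda>x. comm G x g) ` N) G"
proof
  show "(\<lambda>x. comm G x g) ` N \<subseteq> carrier G" using subgroup.subset[OF N] g by auto
  show "\<one> \<in> (\<lambda>x. comm G x g) ` N" using subgroup.one_closed[OF N] g by force
next
  fix x y
  assume "x \<in> (\<lambda>x. comm G x g) ` N" "y \<in> (\<lambda>x. comm G x g) ` N"
  then obtain u v where u: "u \<in> N" "x = comm G u g" and v: "v \<in> N" "y = comm G v g" by blast
  moreover have "u \<in> lcs G 1" "v \<in> lcs G 1" using NA u v by auto
  ultimately have "x \<otimes> y = comm G (u \<otimes> v) g" using comm_mult_derived_left[OF _ _ g] by simp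
  then show "x \<otimes> y \<in> (\<lambda>x. comm G x g) ` N" using subgroup.m_closed[OF N u(1) v(1)] by blast
next
  fix x
  assume "x \<in> (\<lambda>x. comm G x g) ` N"
  then obtain u where u: "u \<in> N" "x = comm G u g" by blast
  moreover have "u \<in> lcs G 1" using NA u by auto
  ultimately have "inv x = comm G (inv u) g" using comm_inv_derived_left[OF _ g] by simp
  then show "inv x \<in> (\<lambda>x. comm G x g) ` N" using subgroup.m_inv_closed[OF N u(1)] by blast
qed

lemma set_mult_derived_subgroup:
  assumes H: "subgroup H G" and K: "subgroup K G" and "H \<subseteq> lcs G 1" and "K \<subseteq> lcs G 1"
  shows "subgroup (H <#> K) G"
proof
  show "H <#> K \<subseteq> carrier G"
    using set_mult_subset_subgroup[OF subgroup_self] subgroup.subset[OF H] subgroup.subset[OF K] .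
  show "\<one> \<in> H <#> K"
    using set_multI[OF subgroup.one_closed[OF H] subgroup.one_closed[OF K]] by simp
next
  fix x y
  assume "x \<in> H <#> K" "y \<in> H <#> K"
  then obtain h k h' k' where hk: "h \<in> H" "k \<in> K" "x = h \<otimes> k" and hk': "h' \<in> H" "k' \<in> K" "y = h' \<otimes> k'"
    by (auto elim!: set_multE)
  moreover have A: "h \<in> lcs G 1" "k \<in> lcs G 1" "h' \<in> lcs G 1" "k' \<in> lcs G 1"
    using hk hk' assms(3,4) by auto
  ultimately have "x \<otimes> y = (h \<otimes> h') \<otimes> (k \<otimes> k')"
    using derived_left_comm[OF A(2) A(3) lcs_carrier[OF A(4)]] lcs_carrier by (simp add: m_assoc)
  then show "x \<otimes> y \<in> H <#> K"
    using set_multI[OF subgroup.m_closed[OF H hk(1) hk'(1)] subgroup.m_closed[OF K hk(2) hk'(2)]] by simp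
next
  fix x
  assume "x \<in> H <#> K"
  then obtain h k where hk: "h \<in> H" "k \<in> K" "x = h \<otimes> k" by (rule set_multE)
  moreover have A: "h \<in> lcs G 1" "k \<in> lcs G 1" using hk assms(3,4) by auto
  ultimately have "inv x = inv h \<otimes> inv k"
    using derived_comm[OF A] lcs_carrier by (simp add: inv_mult_group)
  then show "inv x \<in> H <#> K"
    using set_multI[OF subgroup.m_inv_closed[OF H hk(1)] subgroup.m_inv_closed[OF K hk(2)]] by simp
qed

lemma cyclic_ext_normal:
  assumes fin: "finite (carrier G)" and t: "t \<in> lcs G 1" and M: "M \<lhd> G" and MA: "M \<subseteq> lcs G 1"
    and c: "\<And>g. g \<in> carrier G \<Longrightarrow> comm G t g \<in> M"
  shows "cyclic_ext G t M \<lhd> G"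
proof (rule normal_invI[OF cyclic_ext_subgroup[OF fin M lcs_carrier[OF t]]])
  fix x h
  assume x: "x \<in> carrier G" and "h \<in> cyclic_ext G t M"
  then obtain k m where m: "m \<in> M" and h: "h = t [^] (k::nat) \<otimes> m" by (auto elim: cyclic_extE)
  have tc: "t \<in> carrier G" using lcs_carrier[OF t] .
  have mc: "m \<in> carrier G" using MA m lcs_carrier by blast
  define e where "e = comm G t (inv x)"
  have eM: "e \<in> M" unfolding e_def using c x by simp
  have eA: "e \<in> lcs G 1" using eM MA by blast
  have "x \<otimes> h \<otimes> inv x = (x \<otimes> t [^] k \<otimes> inv x) \<otimes> (x \<otimes> m \<otimes> inv x)"
    unfolding h using x tc mc by (simp add: m_assoc)
  also have "x \<otimes> t [^] k \<otimes> inv x = (x \<otimes> t \<otimes> inv x) [^] k" using conj_nat_pow[OF x tc] .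
  also have "x \<otimes> t \<otimes> inv x = t \<otimes> e" unfolding e_def comm_def using x tc by (simp add: m_assoc)
  also have "(t \<otimes> e) [^] k = t [^] k \<otimes> e [^] k" using nat_pow_mult_derived[OF t eA] .
  finally have "x \<otimes> h \<otimes> inv x = t [^] k \<otimes> (e [^] k \<otimes> (x \<otimes> m \<otimes> inv x))"
    using tc lcs_carrier[OF eA] x mc by (simp add: m_assoc)
  moreover have "e [^] k \<otimes> (x \<otimes> m \<otimes> inv x) \<in> M"
    using subgroup.m_closed[OF normal_imp_subgroup[OF M] subgroup_nat_pow_closed[OF normal_imp_subgroup[OF M] eM]
        normal.inv_op_closed2[OF M x m]] .
  ultimately show "x \<otimes> h \<otimes> inv x \<in> cyclic_ext G t M" using cyclic_extI by simp
qed

end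

section \<open>Groups of order \<open>p\<^sup>7\<close> and class 5\<close>

locale p7_class5_group = p_group G p 7 for G (structure) and p +
  assumes class_5: "nilpotency_class G 5"
    and elementary_abelian_gamma2: "elementary_abelian G (gamma G 2) p"
    and card_gamma_2: "card (gamma G 2) = p ^ 5"

sublocale p7_class5_group \<subseteq> metabelian_group
  using elementary_abelian_gamma2 by unfold_locales (auto simp: elementary_abelian_def gamma_def)

context p7_class5_group
begin

abbreviation "\<gamma>\<^sub>2 \<equiv> lcs G 1"
abbreviation "\<gamma>\<^sub>3 \<equiv> lcs G 2"
abbreviation "\<gamma>\<^sub>4 \<equiv> lcs G 3"
abbreviation "\<gamma>\<^sub>5 \<equiv> lcs G 4"

lemma gamma6_eq_one: "lcs G 5 = {\<one>}"
  using class_5 by (simp add: nilpotency_class_def gamma_def)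

lemma gamma5_ne_one: "\<gamma>\<^sub>5 \<noteq> {\<one>}"
  using class_5 by (simp add: nilpotency_class_def gamma_def)

lemma gamma2_exponent: "x \<in> \<gamma>\<^sub>2 \<Longrightarrow> x [^] p = \<one>"
  using elementary_abelian_gamma2 by (simp add: elementary_abelian_def gamma_def)

lemma card_gamma2: "card \<gamma>\<^sub>2 = p ^ 5"
  using card_gamma_2 by (simp add: gamma_def)

lemma lcs_Suc_ne: "k \<le> 4 \<Longrightarrow> lcs G (Suc k) \<noteq> lcs G k"
proof
  assume k: "k \<le> 4" and eq: "lcs G (Suc k) = lcs G k"
  have "lcs G k = lcs G (k + (5 - k))" using lcs_stable[OF eq] by simp
  then have "lcs G k = {\<one>}" using k gamma6_eq_one by simp
  moreover have "\<gamma>\<^sub>5 \<subseteq> lcs G k" using lcs_antimono k by blast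
  ultimately show False using gamma5_ne_one lcs_one_closed by blast
qed

lemma gamma_chain: "\<gamma>\<^sub>3 \<subseteq> \<gamma>\<^sub>2" "\<gamma>\<^sub>4 \<subseteq> \<gamma>\<^sub>3" "\<gamma>\<^sub>5 \<subseteq> \<gamma>\<^sub>4"
  using lcs_Suc_subset[of 1] lcs_Suc_subset[of 2] lcs_Suc_subset[of 3] by (simp_all add: eval_nat_numeral)

lemma gamma_subset_gamma2: "\<gamma>\<^sub>3 \<subseteq> \<gamma>\<^sub>2" "\<gamma>\<^sub>4 \<subseteq> \<gamma>\<^sub>2" "\<gamma>\<^sub>5 \<subseteq> \<gamma>\<^sub>2"
  using gamma_chain by auto

lemma comm_gamma3_in_gamma4: "x \<in> \<gamma>\<^sub>3 \<Longrightarrow> g \<in> carrier G \<Longrightarrow> comm G x g \<in> \<gamma>\<^sub>4"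
  using lcs_comm_closed[of x 2 g] by (simp add: numeral_3_eq_3 numeral_2_eq_2)

lemma comm_gamma4_in_gamma5: "x \<in> \<gamma>\<^sub>4 \<Longrightarrow> g \<in> carrier G \<Longrightarrow> comm G x g \<in> \<gamma>\<^sub>5"
  using lcs_comm_closed[of x 3 g] by (simp add: eval_nat_numeral)

lemma comm_gamma5_eq_one: "x \<in> \<gamma>\<^sub>5 \<Longrightarrow> g \<in> carrier G \<Longrightarrow> comm G x g = \<one>"
  using lcs_comm_closed[of x 4 g] gamma6_eq_one by (simp add: eval_nat_numeral)

lemma card_cyclic_ext_gamma2_le: "t \<in> \<gamma>\<^sub>2 \<Longrightarrow> N \<subseteq> carrier G \<Longrightarrow> card (cyclic_ext G t N) \<le> p * card N"
  using card_cyclic_ext_le[OF lcs_carrier gamma2_exponent] finite_subset_carrier p_gt_1 by simp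

lemma nat_pow_gamma2_eq_one: "t \<in> \<gamma>\<^sub>2 \<Longrightarrow> p dvd k \<Longrightarrow> t [^] k = \<one>"
  using gamma2_exponent lcs_carrier by (auto simp: nat_pow_pow[symmetric])

lemma gamma2_mem_subgroup_if_nat_pow:
  assumes K: "subgroup K G" and t: "t \<in> \<gamma>\<^sub>2" and "t [^] m \<in> K" and "\<not> p dvd m"
  shows "t \<in> K"
  using mem_subgroup_if_nat_pows[OF K lcs_carrier[OF t] _ assms(3,4)] gamma2_exponent[OF t]
    subgroup.one_closed[OF K] by simp

lemma cyclic_ext_gamma2_ne_carrier:
  assumes a: "a \<in> carrier G"
  shows "cyclic_ext G a \<gamma>\<^sub>2 \<noteq> carrier G"
proof
  assume eq: "cyclic_ext G a \<gamma>\<^sub>2 = carrier G"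
  have N: "\<gamma>\<^sub>3 \<lhd> G" by (rule lcs_normal)
  have ca: "comm G x a \<in> \<gamma>\<^sub>3" if x: "x \<in> carrier G" for x
  proof -
    have "x \<in> cyclic_ext G a \<gamma>\<^sub>2" using x eq by simp
    then obtain i y where y: "y \<in> \<gamma>\<^sub>2" and "x = a [^] (i::nat) \<otimes> y" by (rule cyclic_extE)
    moreover have "comm G (a [^] i) a \<in> \<gamma>\<^sub>3"
      using comm_in_normal_pow_left[OF N a a] a lcs_one_closed by simp
    ultimately show ?thesis
      using comm_in_normal_mult_left[OF N _ lcs_carrier[OF y] a] comm_derived_in_lcs2[OF y a] a by simp
  qed
  have "comm G x g \<in> \<gamma>\<^sub>3" if x: "x \<in> carrier G" and g: "g \<in> carrier G" for x g
  proof -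
    have "g \<in> cyclic_ext G a \<gamma>\<^sub>2" using g eq by simp
    then obtain i y where y: "y \<in> \<gamma>\<^sub>2" and "g = a [^] (i::nat) \<otimes> y" by (rule cyclic_extE)
    moreover have "comm G x (a [^] i) \<in> \<gamma>\<^sub>3" using comm_in_normal_pow_right[OF N a x ca[OF x]] .
    moreover have "comm G x y \<in> \<gamma>\<^sub>3"
      using comm_in_normal_swap[OF N lcs_carrier[OF y] x comm_derived_in_lcs2[OF y x]] .
    ultimately show ?thesis using comm_in_normal_mult_right[OF N _ lcs_carrier[OF y] x] a by simp
  qed
  then have "lcs G (Suc 0) \<subseteq> \<gamma>\<^sub>3" by (intro lcs_Suc_least[OF lcs_subgroup]) simp
  then show False using lcs_Suc_ne[of 1] gamma_chain by (simp add: numeral_2_eq_2)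
qed

lemma cyclic_ext_gamma2_subgroup: "g \<in> carrier G \<Longrightarrow> subgroup (cyclic_ext G g \<gamma>\<^sub>2) G"
  using cyclic_ext_subgroup[OF finite_carrier lcs_normal] .

lemma cyclic_ext_gamma2_normal: "g \<in> carrier G \<Longrightarrow> cyclic_ext G g \<gamma>\<^sub>2 \<lhd> G"
  using normal_if_derived_subset[OF cyclic_ext_gamma2_subgroup subset_cyclic_ext[OF lcs_subset_carrier]] .

lemma card_cyclic_ext_gamma2:
  assumes g: "g \<in> carrier G" and "g \<notin> \<gamma>\<^sub>2"
  shows "card (cyclic_ext G g \<gamma>\<^sub>2) = p ^ 6"
proof -
  note S = cyclic_ext_gamma2_subgroup[OF g]
  have "g \<in> cyclic_ext G g \<gamma>\<^sub>2" using gen_in_cyclic_ext[OF g lcs_one_closed] .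
  then have "\<gamma>\<^sub>2 \<noteq> cyclic_ext G g \<gamma>\<^sub>2" using \<open>g \<notin> \<gamma>\<^sub>2\<close> by blast
  then have "p * p ^ 5 \<le> card (cyclic_ext G g \<gamma>\<^sub>2)"
    using card_psubgroup[OF lcs_subgroup S subset_cyclic_ext[OF lcs_subset_carrier]] card_gamma2 by simp
  moreover have "p * card (cyclic_ext G g \<gamma>\<^sub>2) \<le> p ^ 7"
    using card_psubgroup[OF S subgroup_self subgroup.subset[OF S]] cyclic_ext_gamma2_ne_carrier[OF g]
      card_carrier by simp
  ultimately show ?thesis using p_gt_1 by (simp add: numeral_eq_Suc)
qed

lemma nat_pow_p_in_gamma2: "g \<in> carrier G \<Longrightarrow> g [^] p \<in> \<gamma>\<^sub>2"
proof (cases "g \<in> \<gamma>\<^sub>2")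
  case True
  then show ?thesis by (rule derived_nat_pow_closed)
next
  case False
  assume g: "g \<in> carrier G"
  then have "card (cyclic_ext G g \<gamma>\<^sub>2) \<le> p * card \<gamma>\<^sub>2"
    using card_cyclic_ext_gamma2[OF g False] card_gamma2 by (simp add: numeral_eq_Suc)
  then show ?thesis using nat_pow_prime_in_normal[OF lcs_normal g] by simp
qed

text \<open>A generating pair: \<open>a\<close> and \<open>b\<close> map to a basis of \<open>G/\<gamma>\<^sub>2 \<cong> C\<^sub>p \<times> C\<^sub>p\<close>.\<close>

definition gen_pair :: "'a \<Rightarrow> 'a \<Rightarrow> bool" where
  "gen_pair a b \<longleftrightarrow> a \<in> carrier G \<and> b \<in> carrier G \<and> a \<notin> \<gamma>\<^sub>2 \<and> b \<notin> cyclic_ext G a \<gamma>\<^sub>2"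

lemma gen_pairD:
  assumes "gen_pair a b"
  shows "a \<in> carrier G" "b \<in> carrier G" "a \<notin> \<gamma>\<^sub>2" "b \<notin> cyclic_ext G a \<gamma>\<^sub>2"
  using assms unfolding gen_pair_def by auto

lemma gen_pair_extend:
  assumes a: "a \<in> carrier G" and "a \<notin> \<gamma>\<^sub>2"
  obtains b where "gen_pair a b"
proof -
  obtain b where "b \<in> carrier G" "b \<notin> cyclic_ext G a \<gamma>\<^sub>2"
    using cyclic_ext_gamma2_ne_carrier[OF a] subgroup.subset[OF cyclic_ext_gamma2_subgroup[OF a]] by blast
  then show ?thesis using that assms unfolding gen_pair_def by blast
qed

lemma gen_pair_exists: "\<exists>a b. gen_pair a b"
proof -
  obtain a where a: "a \<in> carrier G" "a \<notin> \<gamma>\<^sub>2" using lcs_Suc_ne[of 0] lcs_subset_carrier by auto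
  obtain b where "gen_pair a b" by (rule gen_pair_extend[OF a])
  then show ?thesis by blast
qed

lemma cyclic_ext_gen_pair_eq_carrier:
  assumes ab: "gen_pair a b"
  shows "cyclic_ext G b (cyclic_ext G a \<gamma>\<^sub>2) = carrier G"
proof -
  note d = gen_pairD[OF ab]
  note H = cyclic_ext_gamma2_subgroup[OF d(1)]
  have S: "subgroup (cyclic_ext G b (cyclic_ext G a \<gamma>\<^sub>2)) G"
    using cyclic_ext_subgroup[OF finite_carrier cyclic_ext_gamma2_normal[OF d(1)] d(2)] .
  have "b \<in> cyclic_ext G b (cyclic_ext G a \<gamma>\<^sub>2)" using gen_in_cyclic_ext[OF d(2) subgroup.one_closed[OF H]] .
  then have "cyclic_ext G a \<gamma>\<^sub>2 \<noteq> cyclic_ext G b (cyclic_ext G a \<gamma>\<^sub>2)" using d(4) by blast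
  then have "p * p ^ 6 \<le> card (cyclic_ext G b (cyclic_ext G a \<gamma>\<^sub>2))"
    using card_psubgroup[OF H S subset_cyclic_ext[OF subgroup.subset[OF H]]]
      card_cyclic_ext_gamma2[OF d(1,3)] by simp
  then show ?thesis
    using subset_eq_if_card_le[OF subgroup.subset[OF S] subset_refl] card_carrier
    by (simp add: numeral_eq_Suc)
qed

lemma gen_pair_induct [consumes 2, case_names gen1 gen2 gamma2 mult]:
  assumes "gen_pair a b" and "g \<in> carrier G"
    and "a \<in> T" and "b \<in> T" and "\<gamma>\<^sub>2 \<subseteq> T" and mult: "\<And>x y. x \<in> T \<Longrightarrow> y \<in> T \<Longrightarrow> x \<otimes> y \<in> T"
  shows "g \<in> T"
proof -
  have pow: "t [^] (k::nat) \<in> T" if "t \<in> T" for t k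
    using that assms(5) lcs_one_closed mult by (induct k) auto
  have "g \<in> cyclic_ext G b (cyclic_ext G a \<gamma>\<^sub>2)" using cyclic_ext_gen_pair_eq_carrier[OF assms(1)] assms(2) by simp
  then obtain j h where h: "h \<in> cyclic_ext G a \<gamma>\<^sub>2" and "g = b [^] (j::nat) \<otimes> h" by (rule cyclic_extE)
  moreover obtain i y where y: "y \<in> \<gamma>\<^sub>2" and "h = a [^] (i::nat) \<otimes> y" using h by (rule cyclic_extE)
  ultimately show ?thesis
    using mult[OF pow[OF assms(4)] mult[OF pow[OF assms(3)] subsetD[OF assms(5) y]]] by simp
qed

lemma gen_pair_sym:
  assumes ab: "gen_pair a b"
  shows "gen_pair b a"
proof -
  note d = gen_pairD[OF ab]
  have bA: "b \<notin> \<gamma>\<^sub>2" using d(4) subset_cyclic_ext[OF lcs_subset_carrier] by blast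
  have "a \<notin> cyclic_ext G b \<gamma>\<^sub>2"
  proof
    assume a: "a \<in> cyclic_ext G b \<gamma>\<^sub>2"
    note Sb = cyclic_ext_gamma2_subgroup[OF d(2)]
    have "cyclic_ext G a \<gamma>\<^sub>2 \<subseteq> cyclic_ext G b \<gamma>\<^sub>2"
      using cyclic_ext_subset_subgroup[OF Sb a] subset_cyclic_ext[OF lcs_subset_carrier] by blast
    then have "cyclic_ext G a \<gamma>\<^sub>2 = cyclic_ext G b \<gamma>\<^sub>2"
      using subset_eq_if_card_le[OF _ subgroup.subset[OF Sb]]
        card_cyclic_ext_gamma2[OF d(2) bA] card_cyclic_ext_gamma2[OF d(1,3)] by simp
    then show False using d(4) gen_in_cyclic_ext[OF d(2) lcs_one_closed] by simp
  qed
  then show ?thesis using d bA unfolding gen_pair_def by blast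
qed

lemma gen_pair_nat_pow:
  assumes ab: "gen_pair a b" and k: "\<not> p dvd k"
  shows "gen_pair (b [^] k) a"
proof -
  note d = gen_pairD[OF gen_pair_sym[OF ab]]
  have "b [^] k \<notin> \<gamma>\<^sub>2"
    using mem_subgroup_if_nat_pows[OF lcs_subgroup d(1) nat_pow_p_in_gamma2[OF d(1)] _ k] d(3) by blast
  moreover have "cyclic_ext G (b [^] k) \<gamma>\<^sub>2 \<subseteq> cyclic_ext G b \<gamma>\<^sub>2"
    using cyclic_ext_subset_subgroup[OF cyclic_ext_gamma2_subgroup[OF d(1)]
        nat_pow_in_cyclic_ext[OF d(1) lcs_one_closed]] subset_cyclic_ext[OF lcs_subset_carrier] by blast
  ultimately show ?thesis using d unfolding gen_pair_def by auto
qed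

lemma gen_pair_nat_pows_in_gamma2:
  assumes ab: "gen_pair a b" and x: "a [^] (k::nat) \<otimes> b [^] (l::nat) \<in> \<gamma>\<^sub>2"
  shows "p dvd k \<and> p dvd l"
proof -
  note d = gen_pairD[OF ab]
  note Sa = cyclic_ext_gamma2_subgroup[OF d(1)]
  have "a [^] k \<in> cyclic_ext G a \<gamma>\<^sub>2" using nat_pow_in_cyclic_ext[OF d(1) lcs_one_closed] .
  moreover have "a [^] k \<otimes> b [^] l \<in> cyclic_ext G a \<gamma>\<^sub>2"
    using subset_cyclic_ext[OF lcs_subset_carrier] x by blast
  ultimately have "inv (a [^] k) \<otimes> (a [^] k \<otimes> b [^] l) \<in> cyclic_ext G a \<gamma>\<^sub>2"
    using subgroup.m_closed[OF Sa subgroup.m_inv_closed[OF Sa]] by blast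
  then have bl: "b [^] l \<in> cyclic_ext G a \<gamma>\<^sub>2" using d by simp
  have bp: "b [^] p \<in> cyclic_ext G a \<gamma>\<^sub>2"
    using subset_cyclic_ext[OF lcs_subset_carrier] nat_pow_p_in_gamma2[OF d(2)] by blast
  have pl: "p dvd l" using mem_subgroup_if_nat_pows[OF Sa d(2) bp bl] d(4) by blast
  then obtain l' where "l = p * l'" by blast
  then have "b [^] l \<in> \<gamma>\<^sub>2"
    using derived_nat_pow_closed[OF nat_pow_p_in_gamma2[OF d(2)]] d by (simp add: nat_pow_pow)
  then have "a [^] k \<otimes> b [^] l \<otimes> inv (b [^] l) \<in> \<gamma>\<^sub>2" using derived_mult_closed[OF x derived_inv_closed] by blast
  then have akA: "a [^] k \<in> \<gamma>\<^sub>2" using d by (simp add: m_assoc)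
  then have "p dvd k"
    using mem_subgroup_if_nat_pows[OF lcs_subgroup d(1) nat_pow_p_in_gamma2[OF d(1)]] d(3) by blast
  with pl show ?thesis by simp
qed

lemma comm_in_normal_if_gen_pair:
  assumes ab: "gen_pair a b" and N: "N \<lhd> G" and "\<gamma>\<^sub>3 \<subseteq> N" and ba: "comm G b a \<in> N"
    and g: "g \<in> carrier G" and h: "h \<in> carrier G"
  shows "comm G g h \<in> N"
proof -
  note d = gen_pairD[OF ab]
  have one: "\<one> \<in> N" using subgroup.one_closed[OF normal_imp_subgroup[OF N]] .
  have AN: "comm G y k \<in> N" if "y \<in> \<gamma>\<^sub>2" "k \<in> carrier G" for y k
    using comm_derived_in_lcs2[OF that] \<open>\<gamma>\<^sub>3 \<subseteq> N\<close> by blast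
  have left: "comm G x c \<in> N"
    if c: "c \<in> carrier G" and "comm G a c \<in> N" "comm G b c \<in> N" and x: "x \<in> carrier G" for x c
  proof -
    have "x \<in> {x \<in> carrier G. comm G x c \<in> N}"
      using ab x
    proof (induct rule: gen_pair_induct)
      case gamma2
      show ?case using AN[OF _ c] lcs_carrier by blast
    next
      case (mult x y)
      then show ?case using comm_in_normal_mult_left[OF N _ _ c] by blast
    qed (use d that in auto)
    then show ?thesis by simp
  qed
  have ga: "comm G g a \<in> N" using left[OF d(1) _ ba g] one d(1) by simp
  have gb: "comm G g b \<in> N" using left[OF d(2) comm_in_normal_swap[OF N d(2) d(1) ba] _ g] one d(2) by simp
  have "h \<in> {y \<in> carrier G. comm G g y \<in> N}"
    using ab h
  proof (induct rule: gen_pair_induct)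
    case gamma2
    show ?case using comm_in_normal_swap[OF N _ g AN[OF _ g]] lcs_carrier by blast
  next
    case (mult x y)
    then show ?case using comm_in_normal_mult_right[OF N _ _ g] by blast
  qed (use d ga gb in auto)
  then show ?thesis by simp
qed

text \<open>The \<open>g\<close> with \<open>[lcs G n, g] \<subseteq> [lcs G n, a][lcs G n, b]\<close> contain \<open>a\<close>, \<open>b\<close> and \<open>\<gamma>\<^sub>2\<close> and are closed
  under products, since \<open>[x, u v] = [x, v] [x, u] [[x, u], v]\<close>; so they exhaust \<open>G\<close>.\<close>

lemma lcs_Suc_eq_comm_images:
  assumes ab: "gen_pair a b" and n: "1 \<le> n"
  shows "lcs G (Suc n) = (\<lambda>x. comm G x a) ` lcs G n <#> (\<lambda>x. comm G x b) ` lcs G n"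
    (is "_ = ?P")
proof
  note d = gen_pairD[OF ab]
  have NA: "lcs G n \<subseteq> \<gamma>\<^sub>2" using lcs_antimono[OF n] .
  have img: "(\<lambda>x. comm G x g) ` lcs G n \<subseteq> lcs G (Suc n)" if "g \<in> carrier G" for g
    using lcs_comm_closed that by auto
  show PS: "?P \<subseteq> lcs G (Suc n)" using set_mult_subset_subgroup[OF lcs_subgroup img[OF d(1)] img[OF d(2)]] .
  have imgA: "(\<lambda>x. comm G x g) ` lcs G n \<subseteq> \<gamma>\<^sub>2" if "g \<in> carrier G" for g
    using img[OF that] lcs_Suc_subset_derived by blast
  have Ps: "subgroup ?P G"
    using set_mult_derived_subgroup[OF comm_image_subgroup[OF lcs_subgroup NA d(1)]
        comm_image_subgroup[OF lcs_subgroup NA d(2)] imgA[OF d(1)] imgA[OF d(2)]] .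
  have PN: "?P \<subseteq> lcs G n" using PS lcs_Suc_subset by blast
  have one: "\<one> \<in> (\<lambda>x. comm G x g) ` lcs G n" if "g \<in> carrier G" for g
    using lcs_one_closed that by force
  have "g \<in> {g \<in> carrier G. \<forall>x\<in>lcs G n. comm G x g \<in> ?P}" if g: "g \<in> carrier G" for g
    using ab g
  proof (induct rule: gen_pair_induct)
    case gen1
    have "comm G x a \<in> ?P" if "x \<in> lcs G n" for x
      using set_multI[OF _ one[OF d(2)], of "comm G x a"] that lcs_carrier d by simp
    then show ?case using d by blast
  next
    case gen2
    have "comm G x b \<in> ?P" if "x \<in> lcs G n" for x
      using set_multI[OF one[OF d(1)], of "comm G x b"] that lcs_carrier d by simp
    then show ?case using d by blast
  next
    case gamma2
    have "comm G x y \<in> ?P" if "x \<in> lcs G n" "y \<in> \<gamma>\<^sub>2" for x y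
    proof -
      have "x \<in> \<gamma>\<^sub>2" using NA that(1) by blast
      then show ?thesis using comm_derived_eq_one[OF _ that(2)] subgroup.one_closed[OF Ps] by simp
    qed
    then show ?case using lcs_carrier by blast
  next
    case (mult u v)
    then have uc: "u \<in> carrier G" and vc: "v \<in> carrier G" by auto
    have "comm G x (u \<otimes> v) \<in> ?P" if x: "x \<in> lcs G n" for x
    proof -
      have yP: "comm G x u \<in> ?P" using mult x by blast
      then have "comm G (comm G x u) v \<in> ?P" using mult PN by blast
      moreover have "comm G x v \<in> ?P" using mult x by blast
      ultimately show ?thesis
        using comm_mult_right_expand[OF lcs_carrier[OF x] uc vc] subgroup.m_closed[OF Ps] yP by simp
    qed
    then show ?case using uc vc by blast
  qed
  then show "lcs G (Suc n) \<subseteq> ?P" by (intro lcs_Suc_least[OF Ps]) blast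
qed

lemma lcs_Suc_subset_if_comm_gen_pair:
  assumes "gen_pair a b" and "1 \<le> n" and K: "subgroup K G"
    and "\<And>y. y \<in> lcs G n \<Longrightarrow> comm G y a \<in> K \<and> comm G y b \<in> K"
  shows "lcs G (Suc n) \<subseteq> K"
proof -
  have "(\<lambda>x. comm G x a) ` lcs G n \<subseteq> K" "(\<lambda>x. comm G x b) ` lcs G n \<subseteq> K" using assms(4) by auto
  then show ?thesis using lcs_Suc_eq_comm_images[OF assms(1,2)] set_mult_subset_subgroup[OF K] by simp
qed

lemma lcs_Suc_subset_if_cyclic_ext:
  assumes ab: "gen_pair a b" and n: "1 \<le> n" and t: "t \<in> \<gamma>\<^sub>2"
    and cover: "lcs G n \<subseteq> cyclic_ext G t (lcs G (Suc n))"
    and K: "subgroup K G" and "lcs G (Suc (Suc n)) \<subseteq> K" and "comm G t a \<in> K" and "comm G t b \<in> K"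
  shows "lcs G (Suc n) \<subseteq> K"
proof (rule lcs_Suc_subset_if_comm_gen_pair[OF ab n K])
  note d = gen_pairD[OF ab]
  fix y
  assume "y \<in> lcs G n"
  then have y: "y \<in> cyclic_ext G t (lcs G (Suc n))" using cover by blast
  have "comm G m g \<in> K" if "m \<in> lcs G (Suc n)" "g \<in> carrier G" for m g
    using lcs_comm_closed[OF that] assms(6) by blast
  then show "comm G y a \<in> K \<and> comm G y b \<in> K"
    using comm_in_cyclic_ext[OF K t lcs_Suc_subset_derived _ _ _ y] assms(7,8) d by blast
qed

lemma gamma3_subset_if_cyclic_ext:
  assumes "gen_pair a b" "t \<in> \<gamma>\<^sub>2" "\<gamma>\<^sub>2 \<subseteq> cyclic_ext G t \<gamma>\<^sub>3"
    "subgroup K G" "\<gamma>\<^sub>4 \<subseteq> K" "comm G t a \<in> K" "comm G t b \<in> K"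
  shows "\<gamma>\<^sub>3 \<subseteq> K"
  using lcs_Suc_subset_if_cyclic_ext[of a b 1 t K] assms by (simp add: numeral_2_eq_2 numeral_3_eq_3)

lemma gamma4_subset_if_cyclic_ext:
  assumes "gen_pair a b" "t \<in> \<gamma>\<^sub>2" "\<gamma>\<^sub>3 \<subseteq> cyclic_ext G t \<gamma>\<^sub>4"
    "subgroup K G" "\<gamma>\<^sub>5 \<subseteq> K" "comm G t a \<in> K" "comm G t b \<in> K"
  shows "\<gamma>\<^sub>4 \<subseteq> K"
  using lcs_Suc_subset_if_cyclic_ext[of a b 2 t K] assms by simp

lemma gamma5_subset_if_cyclic_ext:
  assumes "gen_pair a b" "t \<in> \<gamma>\<^sub>2" "\<gamma>\<^sub>4 \<subseteq> cyclic_ext G t \<gamma>\<^sub>5"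
    "subgroup K G" "comm G t a \<in> K" "comm G t b \<in> K"
  shows "\<gamma>\<^sub>5 \<subseteq> K"
  using lcs_Suc_subset_if_cyclic_ext[of a b 3 t K] assms gamma6_eq_one subgroup.one_closed[OF assms(4)]
  by simp

section \<open>The orders of the lower central factors\<close>

lemma gamma2_eq_cyclic_ext:
  assumes ab: "gen_pair a b"
  shows "\<gamma>\<^sub>2 = cyclic_ext G (comm G b a) \<gamma>\<^sub>3"
proof
  note d = gen_pairD[OF ab]
  have c: "comm G b a \<in> \<gamma>\<^sub>2" using comm_in_derived d by simp
  show "cyclic_ext G (comm G b a) \<gamma>\<^sub>3 \<subseteq> \<gamma>\<^sub>2"
    using cyclic_ext_subset_subgroup[OF lcs_subgroup c gamma_chain(1)] .
  have N: "cyclic_ext G (comm G b a) \<gamma>\<^sub>3 \<lhd> G"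
    using cyclic_ext_normal[OF finite_carrier c lcs_normal gamma_chain(1)] comm_derived_in_lcs2[OF c] by blast
  have "\<gamma>\<^sub>3 \<subseteq> cyclic_ext G (comm G b a) \<gamma>\<^sub>3" using subset_cyclic_ext[OF lcs_subset_carrier] .
  moreover have "comm G b a \<in> cyclic_ext G (comm G b a) \<gamma>\<^sub>3"
    using gen_in_cyclic_ext[OF lcs_carrier[OF c] lcs_one_closed] .
  ultimately have "lcs G (Suc 0) \<subseteq> cyclic_ext G (comm G b a) \<gamma>\<^sub>3"
    by (intro lcs_Suc_least[OF normal_imp_subgroup[OF N]]) (simp add: comm_in_normal_if_gen_pair[OF ab N])
  then show "\<gamma>\<^sub>2 \<subseteq> cyclic_ext G (comm G b a) \<gamma>\<^sub>3" by simp
qed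

lemma card_gamma3: "card \<gamma>\<^sub>3 = p ^ 4"
proof -
  obtain a b where ab: "gen_pair a b" using gen_pair_exists by blast
  have c: "comm G b a \<in> \<gamma>\<^sub>2" using comm_in_derived gen_pairD[OF ab] by simp
  have "card (cyclic_ext G (comm G b a) \<gamma>\<^sub>3) \<le> p * card \<gamma>\<^sub>3"
    using card_cyclic_ext_gamma2_le[OF c lcs_subset_carrier] .
  then have "p ^ 5 \<le> p * card \<gamma>\<^sub>3"
    unfolding gamma2_eq_cyclic_ext[OF ab, symmetric] card_gamma2 .
  moreover have "p * card \<gamma>\<^sub>3 \<le> p ^ 5"
    using card_psubgroup[OF lcs_subgroup lcs_subgroup gamma_chain(1)] lcs_Suc_ne[of 1] card_gamma2
    by (simp add: numeral_2_eq_2)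
  ultimately show ?thesis using p_gt_1 by (simp add: numeral_eq_Suc)
qed

lemma gamma2_eq_cyclic_ext_if_notin:
  "x \<in> \<gamma>\<^sub>2 \<Longrightarrow> x \<notin> \<gamma>\<^sub>3 \<Longrightarrow> cyclic_ext G x \<gamma>\<^sub>3 = \<gamma>\<^sub>2"
  using cyclic_ext_eq_if_card_le[OF lcs_subgroup lcs_normal gamma_chain(1)] card_gamma2 card_gamma3
  by (simp add: numeral_eq_Suc)

lemma gamma3_subset_cyclic_ext:
  assumes ab: "gen_pair a b"
  shows "\<gamma>\<^sub>3 \<subseteq> cyclic_ext G (comm G (comm G b a) a) (cyclic_ext G (comm G (comm G b a) b) \<gamma>\<^sub>4)"
proof
  note d = gen_pairD[OF ab]
  define c where "c = comm G b a"
  have c: "c \<in> \<gamma>\<^sub>2" unfolding c_def using comm_in_derived d by simp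
  have u: "comm G c a \<in> \<gamma>\<^sub>2" "comm G c b \<in> \<gamma>\<^sub>2"
    using comm_derived_in_lcs2[OF c] d gamma_chain(1) by auto
  fix y
  assume "y \<in> \<gamma>\<^sub>3"
  then obtain x1 x2 where x1: "x1 \<in> \<gamma>\<^sub>2" and x2: "x2 \<in> \<gamma>\<^sub>2" and y: "y = comm G x1 a \<otimes> comm G x2 b"
    using lcs_Suc_eq_comm_images[OF ab, of 1] by (auto simp: numeral_2_eq_2 elim!: set_multE)
  have "x1 \<in> cyclic_ext G c \<gamma>\<^sub>3" using gamma2_eq_cyclic_ext[OF ab] x1 c_def by simp
  then obtain i e1 where e1: "e1 \<in> \<gamma>\<^sub>3" "x1 = c [^] (i::nat) \<otimes> e1" by (rule cyclic_extE)
  have "x2 \<in> cyclic_ext G c \<gamma>\<^sub>3" using gamma2_eq_cyclic_ext[OF ab] x2 c_def by simp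
  then obtain j e2 where e2: "e2 \<in> \<gamma>\<^sub>3" "x2 = c [^] (j::nat) \<otimes> e2" by (rule cyclic_extE)
  have f: "comm G e1 a \<in> \<gamma>\<^sub>4" "comm G e2 b \<in> \<gamma>\<^sub>4" using comm_gamma3_in_gamma4 e1 e2 d by auto
  then have fA: "comm G e1 a \<in> \<gamma>\<^sub>2" "comm G e2 b \<in> \<gamma>\<^sub>2" using gamma_subset_gamma2 by auto
  have "comm G x1 a = (comm G c a) [^] i \<otimes> comm G e1 a"
    using e1 comm_pow_mult_derived_left[OF c _ d(1)] gamma_chain(1) by blast
  moreover have "comm G x2 b = (comm G c b) [^] j \<otimes> comm G e2 b"
    using e2 comm_pow_mult_derived_left[OF c _ d(2)] gamma_chain(1) by blast
  ultimately have "y = (comm G c a) [^] i \<otimes> ((comm G c b) [^] j \<otimes> (comm G e1 a \<otimes> comm G e2 b))"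
    unfolding y using u fA by (simp add: derived_ac derived_closed lcs_carrier)
  moreover have "comm G e1 a \<otimes> comm G e2 b \<in> \<gamma>\<^sub>4" using subgroup.m_closed[OF lcs_subgroup f] .
  ultimately show "y \<in> cyclic_ext G (comm G (comm G b a) a) (cyclic_ext G (comm G (comm G b a) b) \<gamma>\<^sub>4)"
    unfolding c_def by (simp add: cyclic_extI)
qed

lemma card_gamma4_ge: "p ^ 2 \<le> card \<gamma>\<^sub>4"
proof -
  obtain a b where ab: "gen_pair a b" using gen_pair_exists by blast
  define c where "c = comm G b a"
  have c: "c \<in> \<gamma>\<^sub>2" unfolding c_def using comm_in_derived gen_pairD[OF ab] by simp
  have u: "comm G c a \<in> \<gamma>\<^sub>2" "comm G c b \<in> \<gamma>\<^sub>2"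
    using comm_derived_in_lcs2[OF c] gen_pairD[OF ab] gamma_chain(1) by auto
  have sub: "cyclic_ext G (comm G c b) \<gamma>\<^sub>4 \<subseteq> carrier G"
    using cyclic_ext_subset_carrier[OF lcs_carrier[OF u(2)] lcs_subset_carrier] .
  have "p ^ 4 \<le> card (cyclic_ext G (comm G c a) (cyclic_ext G (comm G c b) \<gamma>\<^sub>4))"
    using card_mono[OF finite_subset_carrier[OF cyclic_ext_subset_carrier[OF lcs_carrier[OF u(1)] sub]]
        gamma3_subset_cyclic_ext[OF ab, folded c_def]] card_gamma3 by simp
  also have "\<dots> \<le> p * card (cyclic_ext G (comm G c b) \<gamma>\<^sub>4)"
    using card_cyclic_ext_gamma2_le[OF u(1) sub] .
  also have "\<dots> \<le> p * (p * card \<gamma>\<^sub>4)"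
    using card_cyclic_ext_gamma2_le[OF u(2) lcs_subset_carrier] by simp
  finally show ?thesis using p_gt_1 by (simp add: numeral_eq_Suc)
qed

lemma card_gamma4_le_if_cyclic:
  assumes t: "t \<in> \<gamma>\<^sub>2" "\<gamma>\<^sub>4 \<subseteq> cyclic_ext G t \<gamma>\<^sub>5" and s: "s \<in> \<gamma>\<^sub>2" "\<gamma>\<^sub>5 \<subseteq> cyclic_ext G s {\<one>}"
  shows "card \<gamma>\<^sub>4 \<le> p ^ 2"
proof -
  have "card \<gamma>\<^sub>4 \<le> card (cyclic_ext G t \<gamma>\<^sub>5)"
    using card_mono[OF finite_subset_carrier[OF cyclic_ext_subset_carrier[OF lcs_carrier[OF t(1)]
          lcs_subset_carrier]] t(2)] .
  also have "\<dots> \<le> p * card \<gamma>\<^sub>5" using card_cyclic_ext_gamma2_le[OF t(1) lcs_subset_carrier] .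
  also have "card \<gamma>\<^sub>5 \<le> card (cyclic_ext G s {\<one>})"
    using card_mono[OF finite_subset_carrier[OF cyclic_ext_subset_carrier[OF lcs_carrier[OF s(1)]]] s(2)]
    by simp
  also have "\<dots> \<le> p" using card_cyclic_ext_gamma2_le[OF s(1), of "{\<one>}"] by simp
  finally show ?thesis by (simp add: power2_eq_square)
qed

text \<open>If \<open>\<gamma>\<^sub>3/\<gamma>\<^sub>4\<close> is cyclic, generated by \<open>u = [c, a]\<close> or by \<open>v = [c, b]\<close> (\<open>c = [b, a]\<close>),
  then the relation \<open>[v, a] = [u, b]\<close> makes \<open>\<gamma>\<^sub>4/\<gamma>\<^sub>5\<close> and \<open>\<gamma>\<^sub>5\<close> cyclic as well.\<close>

lemma gamma4_gamma5_cyclic_if_comm_in_gamma4: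
  assumes ab: "gen_pair a b" and u4: "comm G (comm G b a) a \<in> \<gamma>\<^sub>4"
  shows "\<exists>t\<in>\<gamma>\<^sub>2. \<exists>s\<in>\<gamma>\<^sub>2. \<gamma>\<^sub>4 \<subseteq> cyclic_ext G t \<gamma>\<^sub>5 \<and> \<gamma>\<^sub>5 \<subseteq> cyclic_ext G s {\<one>}"
proof -
  note d = gen_pairD[OF ab]
  define c where "c = comm G b a"
  have c: "c \<in> \<gamma>\<^sub>2" unfolding c_def using comm_in_derived d by simp
  define u where "u = comm G c a"
  define v where "v = comm G c b"
  have uA: "u \<in> \<gamma>\<^sub>2" "v \<in> \<gamma>\<^sub>2"
    using comm_derived_in_lcs2[OF c] d gamma_chain(1) unfolding u_def v_def by auto
  have u4: "u \<in> \<gamma>\<^sub>4" using u4 unfolding u_def c_def .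
  have cover: "\<gamma>\<^sub>3 \<subseteq> cyclic_ext G v \<gamma>\<^sub>4"
  proof
    fix y
    assume "y \<in> \<gamma>\<^sub>3"
    then obtain i z where z: "z \<in> cyclic_ext G v \<gamma>\<^sub>4" and y: "y = u [^] (i::nat) \<otimes> z"
      using gamma3_subset_cyclic_ext[OF ab, folded c_def, folded u_def v_def] by (blast elim: cyclic_extE)
    obtain j w where w: "w \<in> \<gamma>\<^sub>4" and zw: "z = v [^] (j::nat) \<otimes> w" using z by (rule cyclic_extE)
    have "y = v [^] j \<otimes> (u [^] i \<otimes> w)"
      unfolding y zw using uA w gamma_subset_gamma2 by (auto simp: derived_ac derived_closed lcs_carrier)
    moreover have "u [^] i \<otimes> w \<in> \<gamma>\<^sub>4"
      using subgroup.m_closed[OF lcs_subgroup subgroup_nat_pow_closed[OF lcs_subgroup u4] w] .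
    ultimately show "y \<in> cyclic_ext G v \<gamma>\<^sub>4" by (simp add: cyclic_extI)
  qed
  define v' where "v' = comm G v b"
  have v'A: "v' \<in> \<gamma>\<^sub>2" unfolding v'_def using comm_in_derived lcs_carrier[OF uA(2)] d by simp
  have "comm G v a = comm G u b" unfolding u_def v_def using comm_comm_swap[OF c d(2) d(1)] .
  then have va: "comm G v a \<in> \<gamma>\<^sub>5" using comm_gamma4_in_gamma5[OF u4 d(2)] by simp
  have S4: "\<gamma>\<^sub>4 \<subseteq> cyclic_ext G v' \<gamma>\<^sub>5"
    using gamma4_subset_if_cyclic_ext[OF ab uA(2) cover
        cyclic_ext_subgroup[OF finite_carrier lcs_normal lcs_carrier[OF v'A]]
        subset_cyclic_ext[OF lcs_subset_carrier]]
      subset_cyclic_ext[OF lcs_subset_carrier] va gen_in_cyclic_ext[OF lcs_carrier[OF v'A] lcs_one_closed]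
    unfolding v'_def by blast
  define s where "s = comm G v' b"
  have sA: "s \<in> \<gamma>\<^sub>2" unfolding s_def using comm_in_derived lcs_carrier[OF v'A] d by simp
  have "comm G v' a = \<one>"
    unfolding v'_def using comm_comm_swap[OF uA(2) d(2) d(1)] comm_gamma5_eq_one[OF va d(2)] by simp
  then have "\<gamma>\<^sub>5 \<subseteq> cyclic_ext G s {\<one>}"
    using gamma5_subset_if_cyclic_ext[OF ab v'A S4
        cyclic_ext_subgroup[OF finite_carrier one_is_normal lcs_carrier[OF sA]]]
      gen_in_cyclic_ext[OF lcs_carrier[OF sA]] nat_pow_in_cyclic_ext[OF lcs_carrier[OF sA], of _ 0]
    unfolding s_def by simp
  then show ?thesis using v'A S4 sA by blast
qed

lemma gamma4_gamma5_cyclic_if_gamma3_cyclic: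
  assumes ab: "gen_pair a b" and eq3: "cyclic_ext G (comm G (comm G b a) a) \<gamma>\<^sub>4 = \<gamma>\<^sub>3"
  shows "\<exists>t\<in>\<gamma>\<^sub>2. \<exists>s\<in>\<gamma>\<^sub>2. \<gamma>\<^sub>4 \<subseteq> cyclic_ext G t \<gamma>\<^sub>5 \<and> \<gamma>\<^sub>5 \<subseteq> cyclic_ext G s {\<one>}"
proof -
  note d = gen_pairD[OF ab]
  define c where "c = comm G b a"
  have c: "c \<in> \<gamma>\<^sub>2" unfolding c_def using comm_in_derived d by simp
  define u where "u = comm G c a"
  define v where "v = comm G c b"
  have v3: "v \<in> \<gamma>\<^sub>3" using comm_derived_in_lcs2[OF c] d unfolding v_def by auto
  have uA: "u \<in> \<gamma>\<^sub>2" using comm_derived_in_lcs2[OF c] d gamma_chain(1) unfolding u_def by auto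
  have eq3: "cyclic_ext G u \<gamma>\<^sub>4 = \<gamma>\<^sub>3" using eq3 unfolding u_def c_def .
  obtain k e where e: "e \<in> \<gamma>\<^sub>4" and ve: "v = u [^] (k::nat) \<otimes> e"
    using v3 eq3 by (blast elim: cyclic_extE)
  have eA: "e \<in> \<gamma>\<^sub>2" using e gamma_subset_gamma2 by blast
  define u' where "u' = comm G u a"
  have u'A: "u' \<in> \<gamma>\<^sub>2" unfolding u'_def using comm_in_derived lcs_carrier[OF uA] d by simp
  have ea: "comm G e a \<in> \<gamma>\<^sub>5" using comm_gamma4_in_gamma5[OF e d(1)] .
  have "comm G u b = comm G v a" unfolding u_def v_def using comm_comm_swap[OF c d(1) d(2)] .
  then have ub: "comm G u b = u' [^] k \<otimes> comm G e a"
    using ve comm_pow_mult_derived_left[OF uA eA d(1)] u'_def by simp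
  have S4: "\<gamma>\<^sub>4 \<subseteq> cyclic_ext G u' \<gamma>\<^sub>5"
    using gamma4_subset_if_cyclic_ext[OF ab uA eq3[symmetric, THEN equalityD1]
        cyclic_ext_subgroup[OF finite_carrier lcs_normal lcs_carrier[OF u'A]]
        subset_cyclic_ext[OF lcs_subset_carrier]]
      gen_in_cyclic_ext[OF lcs_carrier[OF u'A] lcs_one_closed] ub cyclic_extI[OF ea]
    unfolding u'_def by simp
  define s where "s = comm G u' a"
  have sA: "s \<in> \<gamma>\<^sub>2" unfolding s_def using comm_in_derived lcs_carrier[OF u'A] d by simp
  have "comm G u' b = comm G (comm G u b) a"
    unfolding u'_def using comm_comm_swap[OF uA d(1) d(2)] .
  also have "\<dots> = s [^] k \<otimes> comm G (comm G e a) a"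
    using ub comm_pow_mult_derived_left[OF u'A _ d(1)] ea gamma_subset_gamma2 s_def by auto
  also have "\<dots> = s [^] k" using comm_gamma5_eq_one[OF ea d(1)] lcs_carrier[OF sA] by simp
  finally have "\<gamma>\<^sub>5 \<subseteq> cyclic_ext G s {\<one>}"
    using gamma5_subset_if_cyclic_ext[OF ab u'A S4
        cyclic_ext_subgroup[OF finite_carrier one_is_normal lcs_carrier[OF sA]]]
      gen_in_cyclic_ext[OF lcs_carrier[OF sA]] nat_pow_in_cyclic_ext[OF lcs_carrier[OF sA]]
    unfolding s_def by simp
  then show ?thesis using u'A S4 sA by blast
qed

lemma card_gamma4_ne_cube: "card \<gamma>\<^sub>4 \<noteq> p ^ 3"
proof
  assume c3: "card \<gamma>\<^sub>4 = p ^ 3"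
  obtain a b where ab: "gen_pair a b" using gen_pair_exists by blast
  define u where "u = comm G (comm G b a) a"
  have u3: "u \<in> \<gamma>\<^sub>3"
    unfolding u_def using comm_derived_in_lcs2[OF comm_in_derived] gen_pairD[OF ab] by simp
  have "\<exists>t\<in>\<gamma>\<^sub>2. \<exists>s\<in>\<gamma>\<^sub>2. \<gamma>\<^sub>4 \<subseteq> cyclic_ext G t \<gamma>\<^sub>5 \<and> \<gamma>\<^sub>5 \<subseteq> cyclic_ext G s {\<one>}"
  proof (cases "u \<in> \<gamma>\<^sub>4")
    case True
    then show ?thesis using gamma4_gamma5_cyclic_if_comm_in_gamma4[OF ab] unfolding u_def by blast
  next
    case False
    have "card \<gamma>\<^sub>3 \<le> p * card \<gamma>\<^sub>4" using c3 card_gamma3 by (simp add: numeral_eq_Suc)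
    then have "cyclic_ext G u \<gamma>\<^sub>4 = \<gamma>\<^sub>3"
      using cyclic_ext_eq_if_card_le[OF lcs_subgroup lcs_normal gamma_chain(2) _ u3 False] by simp
    then show ?thesis using gamma4_gamma5_cyclic_if_gamma3_cyclic[OF ab] unfolding u_def by blast
  qed
  then have "card \<gamma>\<^sub>4 \<le> p ^ 2" using card_gamma4_le_if_cyclic by blast
  then show False using c3 p_gt_1 by simp
qed

lemma card_gamma4: "card \<gamma>\<^sub>4 = p ^ 2"
proof -
  have "p * card \<gamma>\<^sub>4 \<le> p ^ 4"
    using card_psubgroup[OF lcs_subgroup lcs_subgroup gamma_chain(2)] lcs_Suc_ne[of 2] card_gamma3
    by (simp add: numeral_3_eq_3 numeral_2_eq_2)
  then have "card \<gamma>\<^sub>4 \<le> p ^ 3" using p_gt_1 by (simp add: numeral_eq_Suc)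
  moreover obtain i where i: "card \<gamma>\<^sub>4 = p ^ i" using card_subgroup[OF lcs_subgroup] by blast
  ultimately have "i \<le> 3" and "2 \<le> i" using card_gamma4_ge p_gt_1 by simp_all
  moreover have "i \<noteq> 3" using card_gamma4_ne_cube i by blast
  ultimately show ?thesis using i by (simp add: le_Suc_eq numeral_eq_Suc)
qed

lemma card_gamma5: "card \<gamma>\<^sub>5 = p"
proof -
  have "p * card \<gamma>\<^sub>5 \<le> p ^ 2"
    using card_psubgroup[OF lcs_subgroup lcs_subgroup gamma_chain(3)] lcs_Suc_ne[of 3] card_gamma4
    by (simp add: eval_nat_numeral)
  then have "card \<gamma>\<^sub>5 \<le> p" using p_gt_1 by (simp add: numeral_eq_Suc)
  moreover have "p * card {\<one>} \<le> card \<gamma>\<^sub>5"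
    using card_psubgroup[OF triv_subgroup lcs_subgroup] lcs_one_closed gamma5_ne_one by simp
  ultimately show ?thesis by simp
qed

lemma gamma4_eq_cyclic_ext_if_notin:
  "y \<in> \<gamma>\<^sub>4 \<Longrightarrow> y \<notin> \<gamma>\<^sub>5 \<Longrightarrow> cyclic_ext G y \<gamma>\<^sub>5 = \<gamma>\<^sub>4"
  using cyclic_ext_eq_if_card_le[OF lcs_subgroup lcs_normal gamma_chain(3)] card_gamma4 card_gamma5
  by (simp add: power2_eq_square)

section \<open>The second centre\<close>

lemma gamma3_gens_independent:
  assumes ab: "gen_pair a b"
    and x: "(comm G (comm G b a) a) [^] (i::nat) \<otimes> (comm G (comm G b a) b) [^] (j::nat) \<in> \<gamma>\<^sub>4"
  shows "p dvd i \<and> p dvd j"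
proof -
  note d = gen_pairD[OF ab]
  define c where "c = comm G b a"
  have c: "c \<in> \<gamma>\<^sub>2" unfolding c_def using comm_in_derived d by simp
  define u where "u = comm G c a"
  define v where "v = comm G c b"
  have u3: "u \<in> \<gamma>\<^sub>3" "v \<in> \<gamma>\<^sub>3" using comm_derived_in_lcs2[OF c] d unfolding u_def v_def by auto
  then have uA: "u \<in> \<gamma>\<^sub>2" "v \<in> \<gamma>\<^sub>2" using gamma_chain(1) by auto
  have x': "u [^] i \<otimes> v [^] j \<in> \<gamma>\<^sub>4" using x unfolding u_def v_def c_def .
  note Lu = cyclic_ext_subgroup[OF finite_carrier lcs_normal lcs_carrier[OF uA(1)]]
  note Lv = cyclic_ext_subgroup[OF finite_carrier lcs_normal lcs_carrier[OF uA(2)]]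
  have B4L: "\<gamma>\<^sub>4 \<subseteq> cyclic_ext G u \<gamma>\<^sub>4" "\<gamma>\<^sub>4 \<subseteq> cyclic_ext G v \<gamma>\<^sub>4"
    using subset_cyclic_ext[OF lcs_subset_carrier] by blast+
  have small: "\<not> (u \<in> L \<and> v \<in> L)" if L: "subgroup L G" "card L \<le> p ^ 3" "\<gamma>\<^sub>4 \<subseteq> L" for L
  proof
    assume uv: "u \<in> L \<and> v \<in> L"
    have "cyclic_ext G u (cyclic_ext G v \<gamma>\<^sub>4) \<subseteq> L"
      using cyclic_ext_subset_subgroup[OF L(1) conjunct1[OF uv]
          cyclic_ext_subset_subgroup[OF L(1) conjunct2[OF uv] L(3)]] .
    then have "\<gamma>\<^sub>3 \<subseteq> L" using gamma3_subset_cyclic_ext[OF ab, folded c_def, folded u_def v_def] by blast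
    then have "card \<gamma>\<^sub>3 \<le> card L" by (rule card_mono[OF finite_subset_carrier[OF subgroup.subset[OF L(1)]]])
    then have "p ^ 4 \<le> p ^ 3" using card_gamma3 L(2) by linarith
    then show False using p_gt_1 by simp
  qed
  have cardL: "card (cyclic_ext G t \<gamma>\<^sub>4) \<le> p ^ 3" if "t \<in> \<gamma>\<^sub>2" for t
  proof -
    have "card (cyclic_ext G t \<gamma>\<^sub>4) \<le> p * card \<gamma>\<^sub>4" using card_cyclic_ext_gamma2_le[OF that lcs_subset_carrier] .
    then show ?thesis using card_gamma4 by (simp add: numeral_eq_Suc)
  qed
  have "u [^] i \<in> cyclic_ext G u \<gamma>\<^sub>4" using nat_pow_in_cyclic_ext[OF lcs_carrier[OF uA(1)] lcs_one_closed] .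
  moreover have "u [^] i \<otimes> v [^] j \<in> cyclic_ext G u \<gamma>\<^sub>4" using x' B4L(1) by blast
  ultimately have "inv (u [^] i) \<otimes> (u [^] i \<otimes> v [^] j) \<in> cyclic_ext G u \<gamma>\<^sub>4"
    using subgroup.m_closed[OF Lu subgroup.m_inv_closed[OF Lu]] by blast
  then have "v [^] j \<in> cyclic_ext G u \<gamma>\<^sub>4" using lcs_carrier uA by simp
  then have pj: "p dvd j"
    using gamma2_mem_subgroup_if_nat_pow[OF Lu uA(2)] small[OF Lu cardL[OF uA(1)] B4L(1)]
      gen_in_cyclic_ext[OF lcs_carrier[OF uA(1)] lcs_one_closed] by blast
  then have "v [^] j = \<one>" using nat_pow_gamma2_eq_one[OF uA(2)] by blast
  then have ui: "u [^] i \<in> \<gamma>\<^sub>4" using x' lcs_carrier[OF uA(1)] by simp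
  then have "u [^] i \<in> cyclic_ext G v \<gamma>\<^sub>4" using B4L by blast
  then have "p dvd i"
    using gamma2_mem_subgroup_if_nat_pow[OF Lv uA(1)] small[OF Lv cardL[OF uA(2)] B4L(2)]
      gen_in_cyclic_ext[OF lcs_carrier[OF uA(2)] lcs_one_closed] by blast
  with pj show ?thesis by simp
qed

lemma gamma4_comm_eq_one_imp_gamma5:
  assumes ab: "gen_pair a b" and ne: "(\<lambda>x. comm G x a) ` \<gamma>\<^sub>4 \<noteq> {\<one>}"
    and y: "y \<in> \<gamma>\<^sub>4" and ya: "comm G y a = \<one>"
  shows "y \<in> \<gamma>\<^sub>5"
proof (rule ccontr)
  assume "y \<notin> \<gamma>\<^sub>5"
  then have eq: "cyclic_ext G y \<gamma>\<^sub>5 = \<gamma>\<^sub>4" using gamma4_eq_cyclic_ext_if_notin[OF y] by simp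
  have yA: "y \<in> \<gamma>\<^sub>2" using y gamma_subset_gamma2 by blast
  note a = gen_pairD(1)[OF ab]
  have "comm G m a \<in> {\<one>}" if "m \<in> \<gamma>\<^sub>5" for m using comm_gamma5_eq_one[OF that a] by simp
  then have "comm G w a \<in> {\<one>}" if "w \<in> \<gamma>\<^sub>4" for w
    using comm_in_cyclic_ext[OF triv_subgroup yA gamma_subset_gamma2(3) a _ _ that[folded eq]] ya by simp
  moreover have "comm G \<one> a \<in> (\<lambda>x. comm G x a) ` \<gamma>\<^sub>4" using lcs_one_closed by blast
  ultimately show False using ne a by auto
qed

definition center_mod_gamma5 :: "'a set" where
  "center_mod_gamma5 = {g \<in> carrier G. \<forall>h \<in> carrier G. comm G g h \<in> \<gamma>\<^sub>5}"

lemma center_mod_gamma5_subgroup: "subgroup center_mod_gamma5 G"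
proof
  show "center_mod_gamma5 \<subseteq> carrier G" unfolding center_mod_gamma5_def by blast
  show "\<one> \<in> center_mod_gamma5" unfolding center_mod_gamma5_def using lcs_one_closed by simp
next
  fix x y
  assume x: "x \<in> center_mod_gamma5" and y: "y \<in> center_mod_gamma5"
  then have xc: "x \<in> carrier G" and yc: "y \<in> carrier G" unfolding center_mod_gamma5_def by auto
  have "comm G (x \<otimes> y) h \<in> \<gamma>\<^sub>5" if "h \<in> carrier G" for h
    using comm_in_normal_mult_left[OF lcs_normal xc yc that] x y that
    unfolding center_mod_gamma5_def by blast
  then show "x \<otimes> y \<in> center_mod_gamma5" using xc yc unfolding center_mod_gamma5_def by blast
next
  fix x
  assume x: "x \<in> center_mod_gamma5"
  then have xc: "x \<in> carrier G" unfolding center_mod_gamma5_def by auto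
  have "comm G (inv x) h \<in> \<gamma>\<^sub>5" if h: "h \<in> carrier G" for h
  proof -
    have "comm G h x \<in> \<gamma>\<^sub>5"
      using comm_in_normal_swap[OF lcs_normal xc h] x h unfolding center_mod_gamma5_def by blast
    then show ?thesis using normal.inv_op_closed2[OF lcs_normal xc] comm_inv_left[OF xc h] by simp
  qed
  then show "inv x \<in> center_mod_gamma5" unfolding center_mod_gamma5_def using xc by simp
qed

lemma mem_gamma2_if_comm_gamma3:
  assumes g: "g \<in> carrier G" and c: "\<And>h. h \<in> carrier G \<Longrightarrow> comm G g h \<in> \<gamma>\<^sub>3"
  shows "g \<in> \<gamma>\<^sub>2"
proof (rule ccontr)
  assume "g \<notin> \<gamma>\<^sub>2"
  then obtain b where ab: "gen_pair g b" by (rule gen_pair_extend[OF g])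
  note b = gen_pairD(2)[OF ab]
  have "comm G b g \<in> \<gamma>\<^sub>3" using comm_in_normal_swap[OF lcs_normal g b c[OF b]] .
  then have "cyclic_ext G (comm G b g) \<gamma>\<^sub>3 \<subseteq> \<gamma>\<^sub>3"
    using cyclic_ext_subset_subgroup[OF lcs_subgroup _ subset_refl] by blast
  then have "\<gamma>\<^sub>2 \<subseteq> \<gamma>\<^sub>3" unfolding gamma2_eq_cyclic_ext[OF ab, symmetric] .
  then show False using lcs_Suc_ne[of 1] gamma_chain(1) by (simp add: numeral_2_eq_2)
qed

lemma center_mod_gamma5_if_gens:
  assumes ab: "gen_pair a b" and x: "x \<in> \<gamma>\<^sub>2" and "comm G x a \<in> \<gamma>\<^sub>5" and "comm G x b \<in> \<gamma>\<^sub>5"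
  shows "x \<in> center_mod_gamma5"
proof -
  note d = gen_pairD[OF ab]
  have "h \<in> {h \<in> carrier G. comm G x h \<in> \<gamma>\<^sub>5}" if h: "h \<in> carrier G" for h
    using ab h
  proof (induct rule: gen_pair_induct)
    case gamma2
    show ?case using comm_derived_eq_one[OF x] lcs_one_closed lcs_carrier by auto
  next
    case (mult y z)
    then have "y \<in> carrier G" "z \<in> carrier G" "comm G x y \<in> \<gamma>\<^sub>5" "comm G x z \<in> \<gamma>\<^sub>5" by auto
    then show ?case using comm_in_normal_mult_right[OF lcs_normal _ _ lcs_carrier[OF x]] by auto
  qed (use d assms(3,4) in auto)
  then show ?thesis unfolding center_mod_gamma5_def using lcs_carrier[OF x] by blast
qed

lemma gamma4_subset_center_mod_gamma5: "\<gamma>\<^sub>4 \<subseteq> center_mod_gamma5"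
  unfolding center_mod_gamma5_def using comm_gamma4_in_gamma5 lcs_carrier by blast

lemma center_mod_gamma5_subset_gamma3: "center_mod_gamma5 \<subseteq> \<gamma>\<^sub>3"
proof
  fix x
  assume xZ: "x \<in> center_mod_gamma5"
  then have x: "x \<in> carrier G" "\<And>h. h \<in> carrier G \<Longrightarrow> comm G x h \<in> \<gamma>\<^sub>5"
    unfolding center_mod_gamma5_def by auto
  have "comm G x h \<in> \<gamma>\<^sub>3" if "h \<in> carrier G" for h using x(2)[OF that] gamma_chain(2,3) by blast
  then have xA: "x \<in> \<gamma>\<^sub>2" using mem_gamma2_if_comm_gamma3[OF x(1)] by blast
  show "x \<in> \<gamma>\<^sub>3"
  proof (rule ccontr)
    assume "x \<notin> \<gamma>\<^sub>3"
    then have eq: "cyclic_ext G x \<gamma>\<^sub>3 = \<gamma>\<^sub>2" using gamma2_eq_cyclic_ext_if_notin[OF xA] by simp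
    obtain a b where ab: "gen_pair a b" using gen_pair_exists by blast
    have "comm G x a \<in> \<gamma>\<^sub>4" "comm G x b \<in> \<gamma>\<^sub>4" using x(2) gen_pairD[OF ab] gamma_chain(3) by blast+
    then have "\<gamma>\<^sub>3 \<subseteq> \<gamma>\<^sub>4"
      using gamma3_subset_if_cyclic_ext[OF ab xA equalityD2[OF eq] lcs_subgroup subset_refl] by blast
    then show False using lcs_Suc_ne[of 2] gamma_chain(2) by (simp add: numeral_2_eq_2 numeral_3_eq_3)
  qed
qed

lemma gamma3_not_subset_center_mod_gamma5: "\<not> \<gamma>\<^sub>3 \<subseteq> center_mod_gamma5"
proof
  assume B: "\<gamma>\<^sub>3 \<subseteq> center_mod_gamma5"
  obtain a b where ab: "gen_pair a b" using gen_pair_exists by blast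
  have "lcs G (Suc 2) \<subseteq> \<gamma>\<^sub>5"
    by (rule lcs_Suc_subset_if_comm_gen_pair[OF ab _ lcs_subgroup])
      (use B gen_pairD[OF ab] in \<open>auto simp: center_mod_gamma5_def\<close>)
  then show False using lcs_Suc_ne[of 3] gamma_chain(3) by (simp add: eval_nat_numeral)
qed

lemma center_mod_gamma5_if_comm_comm_eq_one:
  assumes ab: "gen_pair a b" and ne: "(\<lambda>x. comm G x a) ` \<gamma>\<^sub>4 \<noteq> {\<one>}"
    and x: "x \<in> \<gamma>\<^sub>3" and xaa: "comm G (comm G x a) a = \<one>"
  shows "x \<in> center_mod_gamma5"
proof -
  note d = gen_pairD[OF ab]
  have xA: "x \<in> \<gamma>\<^sub>2" using x gamma_chain(1) by blast
  have xa: "comm G x a \<in> \<gamma>\<^sub>5"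
    using gamma4_comm_eq_one_imp_gamma5[OF ab ne comm_gamma3_in_gamma4[OF x d(1)] xaa] .
  have "comm G (comm G x b) a = comm G (comm G x a) b" using comm_comm_swap[OF xA d(2) d(1)] .
  also have "\<dots> = \<one>" using comm_gamma5_eq_one[OF xa d(2)] .
  finally have "comm G x b \<in> \<gamma>\<^sub>5"
    using gamma4_comm_eq_one_imp_gamma5[OF ab ne comm_gamma3_in_gamma4[OF x d(2)]] by simp
  then show ?thesis using center_mod_gamma5_if_gens[OF ab xA xa] by simp
qed

text \<open>The map \<open>y \<mapsto> [[y, a], a]\<close> sends \<open>\<gamma>\<^sub>3\<close> into \<open>\<gamma>\<^sub>5 \<cong> C\<^sub>p\<close>; its kernel meets \<open>\<langle>u, v\<rangle>\<close> nontrivially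
  modulo \<open>\<gamma>\<^sub>4\<close>.\<close>

lemma exists_word_in_center_mod_gamma5:
  assumes ab: "gen_pair a b" and ne: "(\<lambda>x. comm G x a) ` \<gamma>\<^sub>4 \<noteq> {\<one>}"
  shows "\<exists>k l. (comm G (comm G b a) a) [^] (k::nat) \<otimes> (comm G (comm G b a) b) [^] (l::nat) \<notin> \<gamma>\<^sub>4
     \<and> (comm G (comm G b a) a) [^] k \<otimes> (comm G (comm G b a) b) [^] l \<in> center_mod_gamma5"
proof -
  note d = gen_pairD[OF ab]
  define c where "c = comm G b a"
  have c: "c \<in> \<gamma>\<^sub>2" unfolding c_def using comm_in_derived d by simp
  define u where "u = comm G c a"
  define v where "v = comm G c b"
  have u3: "u \<in> \<gamma>\<^sub>3" "v \<in> \<gamma>\<^sub>3" using comm_derived_in_lcs2[OF c] d unfolding u_def v_def by auto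
  then have uA: "u \<in> \<gamma>\<^sub>2" "v \<in> \<gamma>\<^sub>2" using gamma_chain(1) by auto
  define ph where "ph = (\<lambda>y. comm G (comm G y a) a)"
  have ph_hom: "ph (s [^] (k::nat) \<otimes> t) = ph s [^] k \<otimes> ph t" if "s \<in> \<gamma>\<^sub>2" "t \<in> \<gamma>\<^sub>2" for s t k
  proof -
    have "comm G s a \<in> \<gamma>\<^sub>2" "comm G t a \<in> \<gamma>\<^sub>2"
      using comm_derived_in_lcs2[OF _ d(1)] that gamma_chain(1) by blast+
    then show ?thesis
      unfolding ph_def comm_pow_mult_derived_left[OF that d(1)]
      using comm_pow_mult_derived_left[OF _ _ d(1)] by blast
  qed
  have ph5: "ph y \<in> \<gamma>\<^sub>5" if "y \<in> \<gamma>\<^sub>3" for y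
    unfolding ph_def using comm_gamma4_in_gamma5[OF comm_gamma3_in_gamma4[OF that d(1)] d(1)] .
  have x3: "u [^] (k::nat) \<otimes> v [^] (l::nat) \<in> \<gamma>\<^sub>3" for k l
    using subgroup.m_closed[OF lcs_subgroup subgroup_nat_pow_closed[OF lcs_subgroup u3(1)]
        subgroup_nat_pow_closed[OF lcs_subgroup u3(2)]] .
  have indep: "u [^] (k::nat) \<otimes> v [^] (1::nat) \<notin> \<gamma>\<^sub>4" "u [^] (1::nat) \<otimes> v [^] (k::nat) \<notin> \<gamma>\<^sub>4" for k
    using gamma3_gens_independent[OF ab, of k 1] gamma3_gens_independent[OF ab, of 1 k] p_gt_1
    unfolding u_def v_def c_def by auto
  have "\<exists>k l. u [^] (k::nat) \<otimes> v [^] (l::nat) \<notin> \<gamma>\<^sub>4 \<and> ph (u [^] k \<otimes> v [^] l) = \<one>"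
  proof (cases "ph u = \<one>")
    case True
    have "u [^] (1::nat) \<otimes> v [^] (0::nat) = u" using lcs_carrier[OF uA(1)] by simp
    then show ?thesis using indep(2)[of 0] True by metis
  next
    case False
    have puA: "ph u \<in> \<gamma>\<^sub>2" using ph5[OF u3(1)] gamma_subset_gamma2 by blast
    have "{\<one>} \<subseteq> \<gamma>\<^sub>5" and "card \<gamma>\<^sub>5 \<le> p * card {\<one>}" using lcs_one_closed card_gamma5 by simp_all
    then have "cyclic_ext G (ph u) {\<one>} = \<gamma>\<^sub>5"
      using cyclic_ext_eq_if_card_le[OF lcs_subgroup one_is_normal _ _ ph5[OF u3(1)]] False by blast
    then have "ph v \<in> cyclic_ext G (ph u) {\<one>}" using ph5[OF u3(2)] by simp
    then obtain m n where "n \<in> {\<one>}" "ph v = ph u [^] (m::nat) \<otimes> n" by (rule cyclic_extE)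
    then have m: "ph v = ph u [^] m" using lcs_carrier[OF puA] by simp
    have km: "(p - 1) * m + m = p * m" using p_gt_1 by (simp add: algebra_simps)
    have "ph (u [^] ((p - 1) * m) \<otimes> v [^] (1::nat)) = ph u [^] ((p - 1) * m + m)"
      using ph_hom[OF uA, of "(p - 1) * m"] m lcs_carrier[OF uA(2)] lcs_carrier[OF puA]
      by (simp add: nat_pow_mult)
    also have "\<dots> = \<one>" unfolding km using nat_pow_gamma2_eq_one[OF puA] by simp
    finally show ?thesis using indep(1) by blast
  qed
  then show ?thesis
    using center_mod_gamma5_if_comm_comm_eq_one[OF ab ne x3] unfolding ph_def u_def v_def c_def by blast
qed

lemma exists_gen_pair_word_in_center_mod_gamma5:
  "\<exists>a b k l. gen_pair a b
    \<and> (comm G (comm G b a) a) [^] (k::nat) \<otimes> (comm G (comm G b a) b) [^] (l::nat) \<notin> \<gamma>\<^sub>4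
    \<and> (comm G (comm G b a) a) [^] k \<otimes> (comm G (comm G b a) b) [^] l \<in> center_mod_gamma5"
proof -
  obtain a b where ab: "gen_pair a b" using gen_pair_exists by blast
  have "(\<lambda>x. comm G x a) ` \<gamma>\<^sub>4 \<noteq> {\<one>} \<or> (\<lambda>x. comm G x b) ` \<gamma>\<^sub>4 \<noteq> {\<one>}"
  proof (rule ccontr)
    assume "\<not> ?thesis"
    then have "\<gamma>\<^sub>5 = {\<one>} <#> {\<one>}"
      using lcs_Suc_eq_comm_images[OF ab, of 3] by (simp add: eval_nat_numeral)
    then show False using gamma5_ne_one by (auto simp: set_mult_def)
  qed
  then show ?thesis
    using exists_word_in_center_mod_gamma5[OF ab] exists_word_in_center_mod_gamma5[OF gen_pair_sym[OF ab]]
      ab gen_pair_sym[OF ab] by blast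
qed

lemma card_center_mod_gamma5: "card center_mod_gamma5 = p ^ 3"
proof -
  have "\<gamma>\<^sub>4 \<noteq> center_mod_gamma5" using exists_gen_pair_word_in_center_mod_gamma5 by blast
  then have "p * p ^ 2 \<le> card center_mod_gamma5"
    using card_psubgroup[OF lcs_subgroup center_mod_gamma5_subgroup gamma4_subset_center_mod_gamma5]
      card_gamma4 by simp
  moreover have "p * card center_mod_gamma5 \<le> p ^ 4"
    using card_psubgroup[OF center_mod_gamma5_subgroup lcs_subgroup center_mod_gamma5_subset_gamma3]
      gamma3_not_subset_center_mod_gamma5 card_gamma3 by auto
  ultimately show ?thesis using p_gt_1 by (simp add: numeral_eq_Suc)
qed

lemma center_subset_center_mod_gamma5: "center G \<subseteq> center_mod_gamma5"
proof
  fix z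
  assume "z \<in> center G"
  then have z: "z \<in> carrier G" "\<And>g. g \<in> carrier G \<Longrightarrow> z \<otimes> g = g \<otimes> z" unfolding center_def by auto
  then have "comm G z h \<in> \<gamma>\<^sub>5" if "h \<in> carrier G" for h
    using comm_eq_one_iff[OF z(1) that] lcs_one_closed that by simp
  then show "z \<in> center_mod_gamma5" unfolding center_mod_gamma5_def using z by blast
qed

lemma gamma5_subset_center: "\<gamma>\<^sub>5 \<subseteq> center G"
  unfolding center_def using comm_gamma5_eq_one lcs_carrier comm_eq_one_iff by blast

lemma center_inter_gamma4: "\<gamma>\<^sub>4 \<inter> center G \<subseteq> \<gamma>\<^sub>5"
proof
  fix y
  assume y: "y \<in> \<gamma>\<^sub>4 \<inter> center G"
  show "y \<in> \<gamma>\<^sub>5"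
  proof (rule ccontr)
    assume "y \<notin> \<gamma>\<^sub>5"
    then have eq: "cyclic_ext G y \<gamma>\<^sub>5 = \<gamma>\<^sub>4" using gamma4_eq_cyclic_ext_if_notin y by blast
    have yA: "y \<in> \<gamma>\<^sub>2" using y gamma_subset_gamma2 by blast
    have "comm G y g = \<one>" if "g \<in> carrier G" for g
      using y that comm_eq_one_iff lcs_carrier[OF yA] unfolding center_def by blast
    moreover obtain a b where ab: "gen_pair a b" using gen_pair_exists by blast
    ultimately have "\<gamma>\<^sub>5 \<subseteq> {\<one>}"
      using gamma5_subset_if_cyclic_ext[OF ab yA eq[symmetric, THEN equalityD1] triv_subgroup]
        gen_pairD[OF ab] by simp
    then show False using gamma5_ne_one lcs_one_closed by blast
  qed
qed

lemma center2_eq_center_mod_gamma5: "center2 G = center_mod_gamma5"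
proof
  show "center_mod_gamma5 \<subseteq> center2 G"
    unfolding center2_def center_mod_gamma5_def using gamma5_subset_center by blast
next
  show "center2 G \<subseteq> center_mod_gamma5"
  proof
    fix z
    assume "z \<in> center2 G"
    then have z: "z \<in> carrier G" and zc: "\<And>g. g \<in> carrier G \<Longrightarrow> comm G z g \<in> center G"
      unfolding center2_def by auto
    have zc3: "comm G z g \<in> \<gamma>\<^sub>3" if "g \<in> carrier G" for g
      using zc[OF that] center_subset_center_mod_gamma5 center_mod_gamma5_subset_gamma3 by blast
    have zA: "z \<in> \<gamma>\<^sub>2" using mem_gamma2_if_comm_gamma3[OF z zc3] .
    obtain a b where ab: "gen_pair a b" using gen_pair_exists by blast
    note d = gen_pairD[OF ab]
    have z3: "z \<in> \<gamma>\<^sub>3"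
    proof (rule ccontr)
      assume "z \<notin> \<gamma>\<^sub>3"
      then have eq: "cyclic_ext G z \<gamma>\<^sub>3 = \<gamma>\<^sub>2" using gamma2_eq_cyclic_ext_if_notin[OF zA] by simp
      have "comm G z g \<in> center_mod_gamma5" if "g \<in> carrier G" for g
        using zc[OF that] center_subset_center_mod_gamma5 by blast
      then have "\<gamma>\<^sub>3 \<subseteq> center_mod_gamma5"
        using gamma3_subset_if_cyclic_ext[OF ab zA _ center_mod_gamma5_subgroup
            gamma4_subset_center_mod_gamma5] eq d by blast
      then show False using gamma3_not_subset_center_mod_gamma5 by blast
    qed
    have "comm G z a \<in> \<gamma>\<^sub>5" "comm G z b \<in> \<gamma>\<^sub>5"
      using center_inter_gamma4 comm_gamma3_in_gamma4[OF z3] zc d by blast+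
    then show "z \<in> center_mod_gamma5" using center_mod_gamma5_if_gens[OF ab zA] by blast
  qed
qed

lemma rcos_mult_comm_iff:
  assumes g: "g \<in> carrier G" and h: "h \<in> carrier G"
  shows "\<gamma>\<^sub>5 #> (g \<otimes> h) = \<gamma>\<^sub>5 #> (h \<otimes> g) \<longleftrightarrow> comm G g h \<in> \<gamma>\<^sub>5"
proof
  note sg = lcs_subgroup[of 4]
  assume eq: "\<gamma>\<^sub>5 #> (g \<otimes> h) = \<gamma>\<^sub>5 #> (h \<otimes> g)"
  have "g \<otimes> h \<in> \<gamma>\<^sub>5 #> (h \<otimes> g)" using rcos_self[OF _ sg, of "g \<otimes> h"] g h eq by simp
  then have "(g \<otimes> h) \<otimes> inv (h \<otimes> g) \<in> \<gamma>\<^sub>5"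
    using subgroup.rcos_module_imp[OF sg is_group, of "h \<otimes> g"] g h by simp
  then have "inv (h \<otimes> g) \<otimes> ((g \<otimes> h) \<otimes> inv (h \<otimes> g)) \<otimes> (h \<otimes> g) \<in> \<gamma>\<^sub>5"
    using normal.inv_op_closed1[OF lcs_normal, of "h \<otimes> g"] g h by simp
  moreover have "inv (h \<otimes> g) \<otimes> ((g \<otimes> h) \<otimes> inv (h \<otimes> g)) \<otimes> (h \<otimes> g) = comm G g h"
    using g h by (simp add: comm_def m_assoc inv_mult_group)
  ultimately show "comm G g h \<in> \<gamma>\<^sub>5" by simp
next
  note sg = lcs_subgroup[of 4]
  assume c: "comm G g h \<in> \<gamma>\<^sub>5"
  have "(h \<otimes> g) \<otimes> comm G g h \<otimes> inv (h \<otimes> g) \<in> \<gamma>\<^sub>5"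
    using normal.inv_op_closed2[OF lcs_normal _ c, of "h \<otimes> g"] g h by simp
  moreover have "(h \<otimes> g) \<otimes> comm G g h \<otimes> inv (h \<otimes> g) = (g \<otimes> h) \<otimes> inv (h \<otimes> g)"
    using g h by (simp add: comm_def m_assoc inv_mult_group)
  ultimately have "g \<otimes> h \<in> \<gamma>\<^sub>5 #> (h \<otimes> g)"
    using subgroup.rcos_module_rev[OF sg is_group, of "h \<otimes> g" "g \<otimes> h"] g h by simp
  then show "\<gamma>\<^sub>5 #> (g \<otimes> h) = \<gamma>\<^sub>5 #> (h \<otimes> g)"
    using repr_independence[of "g \<otimes> h" "\<gamma>\<^sub>5" "h \<otimes> g"] sg g h by simp
qed

lemma center_quotient_gamma5: "center (G Mod \<gamma>\<^sub>5) = (\<lambda>g. \<gamma>\<^sub>5 #> g) ` center_mod_gamma5"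
proof
  show "center (G Mod \<gamma>\<^sub>5) \<subseteq> (\<lambda>g. \<gamma>\<^sub>5 #> g) ` center_mod_gamma5"
  proof
    fix Xc
    assume "Xc \<in> center (G Mod \<gamma>\<^sub>5)"
    then have Xc_coset: "Xc \<in> rcosets \<gamma>\<^sub>5" and comm_cosets: "\<And>Yc. Yc \<in> rcosets \<gamma>\<^sub>5 \<Longrightarrow> Xc <#> Yc = Yc <#> Xc"
      unfolding center_def FactGroup_def by auto
    obtain g where g: "g \<in> carrier G" and Xc_eq: "Xc = \<gamma>\<^sub>5 #> g" using Xc_coset unfolding RCOSETS_def by blast
    have "comm G g h \<in> \<gamma>\<^sub>5" if h: "h \<in> carrier G" for h
    proof -
      have "\<gamma>\<^sub>5 #> h \<in> rcosets \<gamma>\<^sub>5" using rcosetsI[OF lcs_subset_carrier h] .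
      then have "(\<gamma>\<^sub>5 #> g) <#> (\<gamma>\<^sub>5 #> h) = (\<gamma>\<^sub>5 #> h) <#> (\<gamma>\<^sub>5 #> g)" using comm_cosets Xc_eq by simp
      then have "\<gamma>\<^sub>5 #> (g \<otimes> h) = \<gamma>\<^sub>5 #> (h \<otimes> g)" using normal.rcos_sum[OF lcs_normal] g h by simp
      then show ?thesis using rcos_mult_comm_iff[OF g h] by simp
    qed
    then have "g \<in> center_mod_gamma5" unfolding center_mod_gamma5_def using g by blast
    then show "Xc \<in> (\<lambda>g. \<gamma>\<^sub>5 #> g) ` center_mod_gamma5" using Xc_eq by blast
  qed
next
  show "(\<lambda>g. \<gamma>\<^sub>5 #> g) ` center_mod_gamma5 \<subseteq> center (G Mod \<gamma>\<^sub>5)"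
  proof
    fix Xc
    assume "Xc \<in> (\<lambda>g. \<gamma>\<^sub>5 #> g) ` center_mod_gamma5"
    then obtain g where gZ: "g \<in> center_mod_gamma5" and Xc_eq: "Xc = \<gamma>\<^sub>5 #> g" by blast
    have g: "g \<in> carrier G" using gZ unfolding center_mod_gamma5_def by auto
    have Xc_coset: "Xc \<in> rcosets \<gamma>\<^sub>5" using rcosetsI[OF lcs_subset_carrier g] Xc_eq by simp
    have "\<And>Yc. Yc \<in> rcosets \<gamma>\<^sub>5 \<Longrightarrow> Xc <#> Yc = Yc <#> Xc"
    proof -
      fix Yc
      assume "Yc \<in> rcosets \<gamma>\<^sub>5"
      then obtain h where h: "h \<in> carrier G" and Yc_eq: "Yc = \<gamma>\<^sub>5 #> h" unfolding RCOSETS_def by blast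
      have "comm G g h \<in> \<gamma>\<^sub>5" using gZ h unfolding center_mod_gamma5_def by auto
      then have "\<gamma>\<^sub>5 #> (g \<otimes> h) = \<gamma>\<^sub>5 #> (h \<otimes> g)" using rcos_mult_comm_iff[OF g h] by simp
      then show "Xc <#> Yc = Yc <#> Xc" using normal.rcos_sum[OF lcs_normal] g h Xc_eq Yc_eq by simp
    qed
    then show "Xc \<in> center (G Mod \<gamma>\<^sub>5)" unfolding center_def FactGroup_def using Xc_coset by auto
  qed
qed

lemma card_center_quotient_gamma5: "card (center (G Mod \<gamma>\<^sub>5)) = p ^ 2"
proof -
  interpret Z: group "G\<lparr>carrier := center_mod_gamma5\<rparr>"
    using subgroup.subgroup_is_group[OF center_mod_gamma5_subgroup is_group] .
  have sg: "subgroup \<gamma>\<^sub>5 (G\<lparr>carrier := center_mod_gamma5\<rparr>)"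
    using subgroup_incl[OF lcs_subgroup center_mod_gamma5_subgroup] gamma_chain(3)
      gamma4_subset_center_mod_gamma5 by blast
  have "rcosets\<^bsub>G\<lparr>carrier := center_mod_gamma5\<rparr>\<^esub> \<gamma>\<^sub>5 = (\<lambda>g. \<gamma>\<^sub>5 #> g) ` center_mod_gamma5"
    by (auto simp: RCOSETS_def r_coset_def)
  then have "card ((\<lambda>g. \<gamma>\<^sub>5 #> g) ` center_mod_gamma5) * p = p ^ 3"
    using Z.lagrange[OF sg] card_center_mod_gamma5 card_gamma5 by (simp add: order_def)
  then show ?thesis using center_quotient_gamma5 p_gt_1 by (simp add: numeral_eq_Suc)
qed

section \<open>An element of \<open>\<gamma>\<^sub>2\<close> that is not a commutator\<close>

lemma commutator_in_gamma3_eq_comm: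
  assumes "z \<in> commutators G" and z3: "z \<in> \<gamma>\<^sub>3" and z4: "z \<notin> \<gamma>\<^sub>4"
  shows "\<exists>x\<in>\<gamma>\<^sub>2. \<exists>g\<in>carrier G. g \<notin> \<gamma>\<^sub>2 \<and> z = comm G x g"
proof -
  obtain g h where g: "g \<in> carrier G" and h: "h \<in> carrier G" and z: "z = comm G g h"
    using assms(1) unfolding commutators_def by blast
  show ?thesis
  proof (cases "g \<in> \<gamma>\<^sub>2")
    case gA: True
    show ?thesis
    proof (cases "h \<in> \<gamma>\<^sub>2")
      case True
      then show ?thesis using z comm_derived_eq_one[OF gA] z4 lcs_one_closed by simp
    next
      case False
      then show ?thesis using gA h z by blast
    qed
  next
    case gA: False
    show ?thesis
    proof (cases "h \<in> cyclic_ext G g \<gamma>\<^sub>2")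
      case True
      then obtain i y where y: "y \<in> \<gamma>\<^sub>2" and hy: "h = g [^] (i::nat) \<otimes> y" by (rule cyclic_extE)
      have yc: "y \<in> carrier G" using lcs_carrier[OF y] .
      have "z = comm G g y"
        using z hy comm_mult_right[OF g _ yc, of "g [^] i"] comm_nat_pow_self[OF g] g yc by (simp add: m_assoc)
      also have "\<dots> = comm G (inv y) g"
        using comm_inv_derived_left[OF y g] inv_comm[OF yc g] by simp
      finally show ?thesis using g gA derived_inv_closed[OF y] by blast
    next
      case False
      then have gh: "gen_pair g h" unfolding gen_pair_def using g h gA by blast
      have "comm G h g \<in> \<gamma>\<^sub>3" using z3 z inv_comm[OF g h] subgroup.m_inv_closed[OF lcs_subgroup] by metis
      then have "cyclic_ext G (comm G h g) \<gamma>\<^sub>3 \<subseteq> \<gamma>\<^sub>3"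
        using cyclic_ext_subset_subgroup[OF lcs_subgroup _ subset_refl] by blast
      then have "\<gamma>\<^sub>2 \<subseteq> \<gamma>\<^sub>3" unfolding gamma2_eq_cyclic_ext[OF gh, symmetric] .
      then show ?thesis using lcs_Suc_ne[of 1] gamma_chain(1) by (simp add: numeral_2_eq_2)
    qed
  qed
qed

lemma comm_gamma2_in_cyclic_ext:
  assumes ab: "gen_pair a b" and g: "g \<in> carrier G" and N: "N \<lhd> G"
    and N3: "\<And>y. y \<in> \<gamma>\<^sub>3 \<Longrightarrow> comm G y g \<in> N" and x: "x \<in> \<gamma>\<^sub>2"
  shows "comm G x g \<in> cyclic_ext G (comm G (comm G b a) g) N"
proof -
  have c: "comm G b a \<in> \<gamma>\<^sub>2" using comm_in_derived gen_pairD[OF ab] by simp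
  note K = cyclic_ext_subgroup[OF finite_carrier N comm_closed[OF lcs_carrier[OF c] g]]
  have "comm G y g \<in> cyclic_ext G (comm G (comm G b a) g) N" if "y \<in> \<gamma>\<^sub>3" for y
    using N3[OF that] subset_cyclic_ext[OF subgroup.subset[OF normal_imp_subgroup[OF N]]] by blast
  moreover have "x \<in> cyclic_ext G (comm G b a) \<gamma>\<^sub>3" using x gamma2_eq_cyclic_ext[OF ab] by simp
  ultimately show ?thesis
    using comm_in_cyclic_ext[OF K c gamma_chain(1) g]
      gen_in_cyclic_ext[OF comm_closed[OF lcs_carrier[OF c] g] subgroup.one_closed[OF normal_imp_subgroup[OF N]]]
    by blast
qed

lemma comm_gamma2_nat_pow_in_subgroup:
  assumes g: "g \<in> carrier G" and L: "subgroup L G" "L \<subseteq> \<gamma>\<^sub>3" "\<gamma>\<^sub>5 \<subseteq> L"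
    and g3: "\<And>y. y \<in> \<gamma>\<^sub>3 \<Longrightarrow> comm G y g \<in> \<gamma>\<^sub>5" and g2: "\<And>y. y \<in> \<gamma>\<^sub>2 \<Longrightarrow> comm G y g \<in> L"
    and y: "y \<in> \<gamma>\<^sub>2"
  shows "comm G y (g [^] (i::nat)) \<in> L"
proof (induct i)
  case 0
  then show ?case using subgroup.one_closed[OF L(1)] lcs_carrier[OF y] by simp
next
  case (Suc i)
  define q where "q = comm G y (g [^] i)"
  have qL: "q \<in> L" using Suc q_def by simp
  have "comm G y (g [^] Suc i) = comm G y (g [^] i \<otimes> g)" by simp
  also have "\<dots> = comm G y g \<otimes> (q \<otimes> comm G q g)"
    unfolding q_def using comm_mult_right_expand[OF lcs_carrier[OF y] _ g] g by simp
  finally have "comm G y (g [^] Suc i) = comm G y g \<otimes> (q \<otimes> comm G q g)" .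
  moreover have "comm G q g \<in> L" using g3[of q] qL L(2,3) by blast
  ultimately show ?case using subgroup.m_closed[OF L(1) g2[OF y] subgroup.m_closed[OF L(1) qL]] by simp
qed

lemma comm_in_gamma4_if_in_cyclic_ext:
  assumes ab: "gen_pair a b" and gg: "gen_pair g0 g" and t: "t \<in> \<gamma>\<^sub>2"
    and g0M: "\<And>y. y \<in> \<gamma>\<^sub>2 \<Longrightarrow> comm G y g0 \<in> cyclic_ext G t \<gamma>\<^sub>4"
    and x: "x \<in> \<gamma>\<^sub>2" and z: "comm G x g \<in> cyclic_ext G t \<gamma>\<^sub>4"
  shows "comm G x g \<in> \<gamma>\<^sub>4"
proof (rule ccontr)
  assume z4: "comm G x g \<notin> \<gamma>\<^sub>4"
  define M where "M = cyclic_ext G t \<gamma>\<^sub>4"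
  note Ms = cyclic_ext_subgroup[OF finite_carrier lcs_normal lcs_carrier[OF t], of 3, folded M_def]
  have B4M: "\<gamma>\<^sub>4 \<subseteq> M" unfolding M_def using subset_cyclic_ext[OF lcs_subset_carrier] .
  have g: "g \<in> carrier G" using gen_pairD(2)[OF gg] .
  have c: "comm G b a \<in> \<gamma>\<^sub>2" using comm_in_derived gen_pairD[OF ab] by simp
  define t' where "t' = comm G (comm G b a) g"
  have t'A: "t' \<in> \<gamma>\<^sub>2" unfolding t'_def using comm_in_derived lcs_carrier[OF c] g by simp
  have g_3: "comm G y g \<in> \<gamma>\<^sub>4" if "y \<in> \<gamma>\<^sub>3" for y using comm_gamma3_in_gamma4[OF that g] .
  have "comm G x g \<in> cyclic_ext G t' \<gamma>\<^sub>4"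
    unfolding t'_def using comm_gamma2_in_cyclic_ext[OF ab g lcs_normal g_3 x] .
  then obtain m e where e: "e \<in> \<gamma>\<^sub>4" and ze: "comm G x g = t' [^] (m::nat) \<otimes> e" by (rule cyclic_extE)
  have eA: "e \<in> \<gamma>\<^sub>2" using e gamma_subset_gamma2 by blast
  have pm: "\<not> p dvd m"
  proof
    assume "p dvd m"
    then have "comm G x g = e" using ze nat_pow_gamma2_eq_one[OF t'A] lcs_carrier[OF eA] by simp
    then show False using z4 e by simp
  qed
  have "t' [^] m = comm G x g \<otimes> inv e"
    using ze lcs_carrier[OF t'A] lcs_carrier[OF eA] by (simp add: m_assoc)
  moreover have "comm G x g \<otimes> inv e \<in> M"
    using subgroup.m_closed[OF Ms _ subgroup.m_inv_closed[OF Ms]] z e B4M unfolding M_def by blast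
  ultimately have t'M: "t' \<in> M" using gamma2_mem_subgroup_if_nat_pow[OF Ms t'A _ pm] by simp
  have "comm G y g \<in> M" if "y \<in> \<gamma>\<^sub>2" for y
    using comm_gamma2_in_cyclic_ext[OF ab g lcs_normal g_3 that, folded t'_def]
      cyclic_ext_subset_subgroup[OF Ms t'M B4M] by blast
  moreover have "comm G y g0 \<in> M" if "y \<in> \<gamma>\<^sub>2" for y using g0M[OF that] unfolding M_def .
  ultimately have "lcs G (Suc 1) \<subseteq> M" using lcs_Suc_subset_if_comm_gen_pair[OF gg _ Ms] by blast
  then have "card \<gamma>\<^sub>3 \<le> card M"
    using card_mono[OF finite_subset_carrier[OF subgroup.subset[OF Ms]]] by (simp add: numeral_2_eq_2)
  moreover have "card M \<le> p ^ 3"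
    using card_cyclic_ext_gamma2_le[OF t lcs_subset_carrier, of 3] card_gamma4 unfolding M_def
    by (simp add: numeral_eq_Suc)
  ultimately have "p ^ 4 \<le> p ^ 3" using card_gamma3 by linarith
  then show False using p_gt_1 by simp
qed

text \<open>For \<open>g\<^sub>0 \<notin> \<gamma>\<^sub>2\<close> centralising \<open>\<gamma>\<^sub>3\<close> modulo \<open>\<gamma>\<^sub>5\<close>, put \<open>t = [[b, a], g\<^sub>0]\<close>.
  All commutators \<open>[x, g\<^sub>0\<^sup>i]\<close> lie in \<open>\<langle>t\<rangle>\<gamma>\<^sub>5\<close>, while a commutator \<open>[x, g']\<close> with \<open>g'\<close>
  independent of \<open>g\<^sub>0\<close> modulo \<open>\<gamma>\<^sub>2\<close> that lies in \<open>\<langle>t\<rangle>\<gamma>\<^sub>4 \<setminus> \<gamma>\<^sub>4\<close> would force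
  \<open>\<gamma>\<^sub>3 = [\<gamma>\<^sub>2, g\<^sub>0][\<gamma>\<^sub>2, g'] \<subseteq> \<langle>t\<rangle>\<gamma>\<^sub>4\<close>, which is too small.\<close>

lemma not_commutator_if:
  assumes ab: "gen_pair a b" and g0: "g0 \<in> carrier G" "g0 \<notin> \<gamma>\<^sub>2"
    and g0_3: "\<And>y. y \<in> \<gamma>\<^sub>3 \<Longrightarrow> comm G y g0 \<in> \<gamma>\<^sub>5"
    and t: "t = comm G (comm G b a) g0"
    and z: "z \<in> \<gamma>\<^sub>3" "z \<notin> \<gamma>\<^sub>4" "z \<in> cyclic_ext G t \<gamma>\<^sub>4" "z \<notin> cyclic_ext G t \<gamma>\<^sub>5"
  shows "z \<notin> commutators G"
proof
  assume "z \<in> commutators G"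
  then obtain x g where x: "x \<in> \<gamma>\<^sub>2" and g: "g \<in> carrier G" "g \<notin> \<gamma>\<^sub>2" and zx: "z = comm G x g"
    using commutator_in_gamma3_eq_comm[OF _ z(1,2)] by blast
  have c: "comm G b a \<in> \<gamma>\<^sub>2" using comm_in_derived gen_pairD[OF ab] by simp
  have tA: "t \<in> \<gamma>\<^sub>2" unfolding t using comm_in_derived lcs_carrier[OF c] g0(1) by simp
  define L where "L = cyclic_ext G t \<gamma>\<^sub>5"
  note Ls = cyclic_ext_subgroup[OF finite_carrier lcs_normal lcs_carrier[OF tA], of 4, folded L_def]
  have L3: "L \<subseteq> \<gamma>\<^sub>3"
    unfolding L_def t using cyclic_ext_subset_subgroup[OF lcs_subgroup comm_derived_in_lcs2[OF c g0(1)]]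
      gamma_chain(2,3) by blast
  have B5L: "\<gamma>\<^sub>5 \<subseteq> L" unfolding L_def using subset_cyclic_ext[OF lcs_subset_carrier] .
  have g0_2: "comm G y g0 \<in> L" if "y \<in> \<gamma>\<^sub>2" for y
    using comm_gamma2_in_cyclic_ext[OF ab g0(1) lcs_normal g0_3 that] unfolding L_def t .
  show False
  proof (cases "g \<in> cyclic_ext G g0 \<gamma>\<^sub>2")
    case True
    then obtain i y where y: "y \<in> \<gamma>\<^sub>2" and "g = g0 [^] (i::nat) \<otimes> y" by (rule cyclic_extE)
    then have "z = comm G x (g0 [^] i)" using zx comm_mult_derived_right[OF x _ y] g0(1) by simp
    then have "z \<in> L" using comm_gamma2_nat_pow_in_subgroup[OF g0(1) Ls L3 B5L g0_3 g0_2 x] by simp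
    then show False using z(4) unfolding L_def by simp
  next
    case False
    then have gg: "gen_pair g0 g" unfolding gen_pair_def using g0 g by blast
    have "comm G y g0 \<in> cyclic_ext G t \<gamma>\<^sub>4" if "y \<in> \<gamma>\<^sub>2" for y
      using g0_2[OF that] cyclic_ext_mono[OF gamma_chain(3)] unfolding L_def by blast
    then have "z \<in> \<gamma>\<^sub>4" using comm_in_gamma4_if_in_cyclic_ext[OF ab gg tA _ x] z(3) zx by blast
    then show False using z(2) by simp
  qed
qed

lemma comm_gamma3_in_gamma5_if_center_mod_gamma5:
  assumes ab: "gen_pair a b"
    and x: "(comm G (comm G b a) a) [^] (k::nat) \<otimes> (comm G (comm G b a) b) [^] (l::nat) \<in> center_mod_gamma5"
    and y: "y \<in> \<gamma>\<^sub>3"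
  shows "comm G y (a [^] k \<otimes> b [^] l) \<in> \<gamma>\<^sub>5"
proof -
  note d = gen_pairD[OF ab]
  define c where "c = comm G b a"
  have c: "c \<in> \<gamma>\<^sub>2" unfolding c_def using comm_in_derived d by simp
  define u where "u = comm G c a"
  define v where "v = comm G c b"
  have u3: "u \<in> \<gamma>\<^sub>3" "v \<in> \<gamma>\<^sub>3" using comm_derived_in_lcs2[OF c] d unfolding u_def v_def by auto
  then have uA: "u \<in> \<gamma>\<^sub>2" "v \<in> \<gamma>\<^sub>2" using gamma_chain(1) by auto
  have swap: "comm G v a = comm G u b" unfolding u_def v_def using comm_comm_swap[OF c d(2) d(1)] .
  have xZ: "comm G (u [^] k \<otimes> v [^] l) g \<in> \<gamma>\<^sub>5" if "g \<in> carrier G" for g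
    using x that unfolding center_mod_gamma5_def u_def v_def c_def by blast
  have lin: "\<exists>w\<in>\<gamma>\<^sub>5. comm G y (a [^] k \<otimes> b [^] l) = (comm G y a) [^] k \<otimes> (comm G y b) [^] l \<otimes> w"
    if "y \<in> \<gamma>\<^sub>3" for y
    using comm_mult_nat_pows_right_mod_lcs[OF that _ d(1,2), of k l] by (simp add: eval_nat_numeral)
  have expand: "comm G (u [^] k \<otimes> v [^] l) g = (comm G u g) [^] k \<otimes> (comm G v g) [^] l"
    if "g \<in> carrier G" for g
    using comm_mult_derived_left[OF derived_nat_pow_closed[OF uA(1)] derived_nat_pow_closed[OF uA(2)] that]
      comm_nat_pow_derived_left[OF uA(1) that] comm_nat_pow_derived_left[OF uA(2) that] by simp
  have in5: "comm G s (a [^] k \<otimes> b [^] l) \<in> \<gamma>\<^sub>5"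
    if s: "s \<in> \<gamma>\<^sub>3" and sa: "comm G s a = comm G u g" and sb: "comm G s b = comm G v g"
      and g: "g \<in> carrier G" for s g
  proof -
    obtain w where w: "w \<in> \<gamma>\<^sub>5"
      and "comm G s (a [^] k \<otimes> b [^] l) = (comm G s a) [^] k \<otimes> (comm G s b) [^] l \<otimes> w"
      using lin[OF s] by blast
    then have "comm G s (a [^] k \<otimes> b [^] l) = comm G (u [^] k \<otimes> v [^] l) g \<otimes> w"
      using sa sb expand[OF g] by simp
    then show ?thesis using subgroup.m_closed[OF lcs_subgroup xZ[OF g] w] by simp
  qed
  have "comm G u (a [^] k \<otimes> b [^] l) \<in> \<gamma>\<^sub>5" using in5[OF u3(1) refl swap[symmetric] d(1)] .
  moreover have "comm G v (a [^] k \<otimes> b [^] l) \<in> \<gamma>\<^sub>5" using in5[OF u3(2) swap refl d(2)] .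
  moreover have "y \<in> cyclic_ext G u (cyclic_ext G v \<gamma>\<^sub>4)"
    using gamma3_subset_cyclic_ext[OF ab, folded c_def, folded u_def v_def] y by blast
  moreover have "cyclic_ext G v \<gamma>\<^sub>4 \<subseteq> \<gamma>\<^sub>2"
    using cyclic_ext_subset_subgroup[OF lcs_subgroup uA(2) gamma_subset_gamma2(2)] .
  moreover have "comm G m (a [^] k \<otimes> b [^] l) \<in> \<gamma>\<^sub>5" if "m \<in> \<gamma>\<^sub>4" for m
    using comm_gamma4_in_gamma5[OF that] d by simp
  ultimately show ?thesis
    using comm_in_cyclic_ext[OF lcs_subgroup uA(1) _ _ _ comm_in_cyclic_ext[OF lcs_subgroup uA(2)
        gamma_subset_gamma2(2)]] d by simp
qed

lemma mult_notin_cyclic_ext_gamma5: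
  assumes t: "t \<in> \<gamma>\<^sub>2" "t \<notin> \<gamma>\<^sub>4" and w: "w \<in> \<gamma>\<^sub>4" "w \<notin> \<gamma>\<^sub>5"
  shows "t \<otimes> w \<notin> cyclic_ext G t \<gamma>\<^sub>5"
proof
  assume tw: "t \<otimes> w \<in> cyclic_ext G t \<gamma>\<^sub>5"
  note L = cyclic_ext_subgroup[OF finite_carrier lcs_normal lcs_carrier[OF t(1)], of 4]
  have wA: "w \<in> \<gamma>\<^sub>2" using w(1) gamma_subset_gamma2 by blast
  have "inv t \<in> cyclic_ext G t \<gamma>\<^sub>5"
    using subgroup.m_inv_closed[OF L gen_in_cyclic_ext[OF lcs_carrier[OF t(1)] lcs_one_closed]] .
  then have "inv t \<otimes> (t \<otimes> w) \<in> cyclic_ext G t \<gamma>\<^sub>5" using subgroup.m_closed[OF L _ tw] by blast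
  then have "w \<in> cyclic_ext G t \<gamma>\<^sub>5" using lcs_carrier[OF t(1)] lcs_carrier[OF wA] by simp
  then obtain m e where e: "e \<in> \<gamma>\<^sub>5" and we: "w = t [^] (m::nat) \<otimes> e" by (rule cyclic_extE)
  have eA: "e \<in> \<gamma>\<^sub>2" using e gamma_subset_gamma2 by blast
  have "t [^] m = w \<otimes> inv e" using we lcs_carrier[OF t(1)] lcs_carrier[OF eA] by (simp add: m_assoc)
  moreover have "w \<otimes> inv e \<in> \<gamma>\<^sub>4"
    using subgroup.m_closed[OF lcs_subgroup w(1) subgroup.m_inv_closed[OF lcs_subgroup]] e gamma_chain(3)
    by blast
  ultimately have "t [^] m \<in> \<gamma>\<^sub>4" by simp
  then have "p dvd m" using gamma2_mem_subgroup_if_nat_pow[OF lcs_subgroup t(1)] t(2) by blast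
  then show False using we w(2) e nat_pow_gamma2_eq_one[OF t(1)] lcs_carrier[OF eA] by simp
qed

lemma exists_gamma2_not_commutator: "\<exists>z\<in>\<gamma>\<^sub>2. z \<notin> commutators G"
proof -
  obtain a b k l where ab: "gen_pair a b"
    and X: "(comm G (comm G b a) a) [^] (k::nat) \<otimes> (comm G (comm G b a) b) [^] (l::nat) \<notin> \<gamma>\<^sub>4"
      "(comm G (comm G b a) a) [^] k \<otimes> (comm G (comm G b a) b) [^] l \<in> center_mod_gamma5"
    using exists_gen_pair_word_in_center_mod_gamma5 by blast
  note d = gen_pairD[OF ab]
  define c where "c = comm G b a"
  have c: "c \<in> \<gamma>\<^sub>2" unfolding c_def using comm_in_derived d by simp
  define x where "x = (comm G c a) [^] k \<otimes> (comm G c b) [^] l"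
  have x4: "x \<notin> \<gamma>\<^sub>4" using X(1) unfolding x_def c_def .
  define g0 where "g0 = a [^] k \<otimes> b [^] l"
  have g0c: "g0 \<in> carrier G" unfolding g0_def using d by simp
  have uA: "comm G c a \<in> \<gamma>\<^sub>2" "comm G c b \<in> \<gamma>\<^sub>2"
    using comm_derived_in_lcs2[OF c] d gamma_chain(1) by auto
  have g0A: "g0 \<notin> \<gamma>\<^sub>2"
  proof
    assume "g0 \<in> \<gamma>\<^sub>2"
    then have "p dvd k \<and> p dvd l" using gen_pair_nat_pows_in_gamma2[OF ab] g0_def by simp
    then have "x = \<one>" unfolding x_def using nat_pow_gamma2_eq_one uA by simp
    then show False using x4 lcs_one_closed by simp
  qed
  define t where "t = comm G c g0"
  obtain w where w: "w \<in> \<gamma>\<^sub>4" and tw: "t = x \<otimes> w"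
    using comm_mult_nat_pows_right_mod_lcs[OF c _ d(1,2), of k l] unfolding t_def x_def g0_def
    by (auto simp: numeral_3_eq_3)
  have t3: "t \<in> \<gamma>\<^sub>3" unfolding t_def using comm_derived_in_lcs2[OF c g0c] .
  have t4: "t \<notin> \<gamma>\<^sub>4"
  proof
    assume "t \<in> \<gamma>\<^sub>4"
    then have "t \<otimes> inv w \<in> \<gamma>\<^sub>4" using subgroup.m_closed[OF lcs_subgroup _ subgroup.m_inv_closed[OF lcs_subgroup w]] by blast
    moreover have "x \<in> carrier G" unfolding x_def using uA lcs_carrier by simp
    ultimately show False using x4 tw lcs_carrier[OF w] by (simp add: m_assoc)
  qed
  have tA: "t \<in> \<gamma>\<^sub>2" using t3 gamma_chain(1) by blast
  have "\<gamma>\<^sub>5 \<noteq> \<gamma>\<^sub>4" using lcs_Suc_ne[of 3] by simp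
  then obtain w0 where w0: "w0 \<in> \<gamma>\<^sub>4" "w0 \<notin> \<gamma>\<^sub>5" using gamma_chain(3) by blast
  have w0A: "w0 \<in> \<gamma>\<^sub>2" using w0(1) gamma_subset_gamma2 by blast
  define z where "z = t \<otimes> w0"
  have z3: "z \<in> \<gamma>\<^sub>3" unfolding z_def using subgroup.m_closed[OF lcs_subgroup t3] w0 gamma_chain(2) by blast
  have z4: "z \<notin> \<gamma>\<^sub>4"
  proof
    assume "z \<in> \<gamma>\<^sub>4"
    then have "z \<otimes> inv w0 \<in> \<gamma>\<^sub>4" using subgroup.m_closed[OF lcs_subgroup _ subgroup.m_inv_closed[OF lcs_subgroup w0(1)]] by blast
    then show False using t4 lcs_carrier[OF tA] lcs_carrier[OF w0A] unfolding z_def by (simp add: m_assoc)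
  qed
  have zM: "z \<in> cyclic_ext G t \<gamma>\<^sub>4" unfolding z_def using cyclic_extI[OF w0(1), of t 1] lcs_carrier[OF tA] by simp
  have zL: "z \<notin> cyclic_ext G t \<gamma>\<^sub>5" unfolding z_def using mult_notin_cyclic_ext_gamma5[OF tA t4 w0] .
  have "z \<notin> commutators G"
    using not_commutator_if[OF ab g0c g0A comm_gamma3_in_gamma5_if_center_mod_gamma5[OF ab X(2), folded g0_def]
        t_def[unfolded c_def] z3 z4 zM zL] .
  then show ?thesis using z3 gamma_chain(1) by blast
qed

section \<open>Every element of \<open>\<gamma>\<^sub>2\<close> is a product of two commutators\<close>

lemma comm_mult_gamma3_in_commutators:
  assumes ab: "gen_pair a b" and y: "y \<in> \<gamma>\<^sub>3"
  shows "comm G b a \<otimes> y \<in> commutators G"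
proof -
  note d = gen_pairD[OF ab]
  obtain x1 x2 where x1: "x1 \<in> \<gamma>\<^sub>2" and x2: "x2 \<in> \<gamma>\<^sub>2" and y12: "y = comm G x1 a \<otimes> comm G x2 b"
    using y lcs_Suc_eq_comm_images[OF ab, of 1] by (auto simp: numeral_2_eq_2 elim!: set_multE)
  define x2' where "x2' = inv x2"
  have x2': "x2' \<in> \<gamma>\<^sub>2" unfolding x2'_def using derived_inv_closed[OF x2] .
  have ay: "a \<otimes> x2' \<in> carrier G" using d lcs_carrier[OF x2'] by simp
  have A: "comm G b (a \<otimes> x2') \<in> \<gamma>\<^sub>2" "comm G x1 a \<in> \<gamma>\<^sub>2" "comm G b a \<in> \<gamma>\<^sub>2" "comm G x2 b \<in> \<gamma>\<^sub>2"
    using comm_in_derived d ay lcs_carrier[OF x1] lcs_carrier[OF x2] by simp_all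
  have "comm G (b \<otimes> x1) (a \<otimes> x2') = comm G b (a \<otimes> x2') \<otimes> comm G x1 (a \<otimes> x2')"
    using comm_mult_left[OF d(2) lcs_carrier[OF x1] ay] conj_derived_eq[OF A(1) x1] by simp
  also have "comm G x1 (a \<otimes> x2') = comm G x1 a" using comm_mult_derived_right[OF x1 d(1) x2'] .
  also have "comm G b (a \<otimes> x2') = comm G x2 b \<otimes> comm G b a"
  proof -
    have "comm G b x2' = comm G x2 b"
      using inv_comm[OF lcs_carrier[OF x2'] d(2)] comm_inv_derived_left[OF x2' d(2)] lcs_carrier[OF x2]
      unfolding x2'_def by simp
    then show ?thesis
      using comm_mult_right[OF d(2) d(1) lcs_carrier[OF x2']] conj_derived_eq[OF A(3) x2'] d
        lcs_carrier[OF x2'] lcs_carrier[OF x2] by (simp add: m_assoc)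
  qed
  finally have "comm G (b \<otimes> x1) (a \<otimes> x2') = comm G b a \<otimes> y"
    unfolding y12 using A(2-4) by (simp add: derived_ac lcs_carrier)
  then show ?thesis
    unfolding commutators_def using d lcs_carrier[OF x1] ay by (metis (mono_tags, lifting) m_closed mem_Collect_eq)
qed

lemma gamma2_eq_mult_commutators:
  assumes z: "z \<in> \<gamma>\<^sub>2"
  shows "\<exists>k1 \<in> commutators G. \<exists>k2 \<in> commutators G. z = k1 \<otimes> k2"
proof -
  obtain a b where ab: "gen_pair a b" using gen_pair_exists by blast
  note d = gen_pairD[OF ab]
  define c where "c = comm G b a"
  have c: "c \<in> \<gamma>\<^sub>2" unfolding c_def using comm_in_derived d by simp
  have "z \<in> cyclic_ext G c \<gamma>\<^sub>3" using gamma2_eq_cyclic_ext[OF ab] z c_def by simp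
  then obtain r0 e where e: "e \<in> \<gamma>\<^sub>3" and ze0: "z = c [^] (r0::nat) \<otimes> e" by (rule cyclic_extE)
  define r where "r = r0 mod p"
  have ze: "z = c [^] r \<otimes> e"
    unfolding r_def using ze0 nat_pow_mod_eq[OF lcs_carrier[OF c] gamma2_exponent[OF c]] by simp
  have eA: "e \<in> \<gamma>\<^sub>2" using e gamma_chain(1) by blast
  have one: "\<one> \<in> commutators G" unfolding commutators_def using comm_one_left by force
  show ?thesis
  proof (cases "r = 0")
    case True
    txt \<open>\<open>z = [b, a] \<cdot> [a, b] z\<close>, and \<open>[a, b] z\<close> is a commutator for the generating pair \<open>(b, a)\<close>.\<close>
    have "comm G a b \<otimes> e \<in> commutators G"
      using comm_mult_gamma3_in_commutators[OF gen_pair_sym[OF ab] e] .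
    moreover have "comm G a b = inv c" unfolding c_def using inv_comm d by simp
    moreover have "c \<in> commutators G" unfolding c_def commutators_def using d by blast
    moreover have "z = c \<otimes> (inv c \<otimes> z)" using lcs_carrier[OF c] lcs_carrier[OF z] by simp
    ultimately show ?thesis using ze True lcs_carrier[OF eA] by auto
  next
    case False
    then have "\<not> p dvd r" unfolding r_def using p_gt_1 by (meson dvd_imp_le linorder_not_le mod_less_divisor
        neq0_conv order.strict_trans zero_less_one)
    then have g2: "gen_pair (b [^] r) a" using gen_pair_nat_pow[OF ab] by blast
    obtain e' where e': "e' \<in> \<gamma>\<^sub>3" "comm G (b [^] r) a = c [^] r \<otimes> e'"
      using comm_nat_pow_left_mod_lcs2[OF d(2) d(1), of r] c_def by blast
    have e'A: "e' \<in> \<gamma>\<^sub>2" using e'(1) gamma_chain(1) by blast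
    have "comm G (b [^] r) a \<otimes> (inv e' \<otimes> e) = z"
      using e'(2) ze lcs_carrier[OF c] lcs_carrier[OF e'A] lcs_carrier[OF eA] by (simp add: m_assoc)
    moreover have "inv e' \<otimes> e \<in> \<gamma>\<^sub>3"
      using subgroup.m_closed[OF lcs_subgroup subgroup.m_inv_closed[OF lcs_subgroup e'(1)] e] .
    ultimately have "z \<in> commutators G" using comm_mult_gamma3_in_commutators[OF gen_pair_sym[OF g2]] by metis
    then show ?thesis using one lcs_carrier[OF z] by (metis r_one)
  qed
qed

lemma comm_products_1: "comm_products G 1 = commutators G"
proof
  show "comm_products G 1 \<subseteq> commutators G"
  proof
    fix y
    assume "y \<in> comm_products G 1"
    then obtain xs where xs: "y = foldr (\<otimes>) xs \<one>" "length xs \<le> 1" "set xs \<subseteq> commutators G"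
      unfolding comm_products_def by blast
    show "y \<in> commutators G"
    proof (cases xs)
      case Nil
      then show ?thesis using xs unfolding commutators_def using comm_one_left by force
    next
      case (Cons k ys)
      then have "ys = []" and k: "k \<in> commutators G" using xs by auto
      moreover have "k \<in> carrier G" using k unfolding commutators_def by auto
      ultimately show ?thesis using xs Cons k by simp
    qed
  qed
  show "commutators G \<subseteq> comm_products G 1"
  proof
    fix k
    assume k: "k \<in> commutators G"
    then have "k = foldr (\<otimes>) [k] \<one>" unfolding commutators_def by auto
    with k show "k \<in> comm_products G 1"
      unfolding comm_products_def by (intro CollectI exI[of _ "[k]"]) auto
  qed
qed

lemma gamma2_subset_comm_products_2: "\<gamma>\<^sub>2 \<subseteq> comm_products G 2"
proof
  fix z
  assume "z \<in> \<gamma>\<^sub>2"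
  then obtain k1 k2 where k: "k1 \<in> commutators G" "k2 \<in> commutators G" "z = k1 \<otimes> k2"
    using gamma2_eq_mult_commutators by blast
  then have "z = foldr (\<otimes>) [k1, k2] \<one>" unfolding commutators_def by auto
  with k show "z \<in> comm_products G 2"
    unfolding comm_products_def by (intro CollectI exI[of _ "[k1, k2]"]) auto
qed

lemma commutator_length_eq_2: "commutator_length G = 2"
  unfolding commutator_length_def
proof (rule Least_equality)
  show "0 < (2::nat) \<and> gamma G 2 \<subseteq> comm_products G 2"
    using gamma2_subset_comm_products_2 by (simp add: gamma_def)
next
  fix m :: nat
  assume m: "0 < m \<and> gamma G 2 \<subseteq> comm_products G m"
  show "2 \<le> m"
  proof (rule ccontr)
    assume "\<not> 2 \<le> m"
    then have "m = 1" using m by simp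
    then have "\<gamma>\<^sub>2 \<subseteq> commutators G" using m comm_products_1 by (simp add: gamma_def)
    then show False using exists_gamma2_not_commutator by blast
  qed
qed

end

theorem proposition3p3:
  fixes G :: "('a, 'b) monoid_scheme" and p :: nat
  assumes "group G"
    and "Factorial_Ring.prime p" and "p \<ge> 5"
    and "card (carrier G) = p ^ 7"
    and "nilpotency_class G 5"
    and "elementary_abelian G (gamma G 2) p"
    and "card (gamma G 2) = p ^ 5"
  shows "card (gamma G 5) = p
         \<and> card (center (G Mod (gamma G 5))) = p ^ 2 \<and> card (center2 G) = p ^ 3
         \<and> commutators G \<noteq> gamma G 2
         \<and> commutator_length G = 2"
proof -
  \<comment> \<open>The argument works for every prime \<open>p\<close>.\<close>
  interpret p7_class5_group G p
    using assms by (intro p7_class5_group.intro p_group.intro p_group_axioms.intro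
        p7_class5_group_axioms.intro) auto
  have "gamma G 2 = lcs G 1" "gamma G 5 = lcs G 4" by (simp_all add: gamma_def)
  then show ?thesis
    using card_gamma5 card_center_quotient_gamma5 center2_eq_center_mod_gamma5 card_center_mod_gamma5
      exists_gamma2_not_commutator commutator_length_eq_2 by auto
qed

end
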